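(* Let $X\in GL(n,\overline{\mathbb{K}})$ be a Belavin–Drinfeld twisted cocycle associated to $r_{DJ}$. Then $X=PD$ with $P\in GL(n,\mathbb{K}[j])$ and $D\in\mathrm{diag}(n,\overline{\mathbb{K}})$; moreover $\overline{P}=PSD_1$ for some invertible diagonal $D_1\in\mathrm{diag}(n,\mathbb{K}[j])$.
   Context: $\mathbb{K}=\mathbb{C}((\hbar))$, $\overline{\mathbb{K}}$ its algebraic closure, $\mathbb{K}[j]\subset\overline{\mathbb{K}}$ with $j^2=\hbar$, with conjugation $\overline{f_1+jf_2}=f_1-jf_2$ applied entrywise. $S$ is the antidiagonal matrix of ones. $r_{DJ}=\sum_{i<k}e_{ik}\otimes e_{ki}+\frac12\Omega_0$ with $\Omega_0=\sum_ie_{ii}\otimes e_{ii}-\frac1nI\otimes I$; $\mathrm{Ad}_X(a)=XaX^{-1}$; $\mathrm{diag}(n,F)$ denotes invertible diagonal matrices over $F$. A Belavin–Drinfeld twisted cocycle associated to $r_{DJ}$ is $X\in GL(n,\overline{\mathbb{K}})$ such that $(\mathrm{Ad}_{X^{-1}\sigma(X)}\otimes\mathrm{Ad}_{X^{-1}\sigma(X)})(r_{DJ})=r_{DJ}$ for every $\sigma\in\mathrm{Gal}(\overline{\mathbb{K}}/\mathbb{K}[j])$ and $(\mathrm{Ad}_{X^{-1}\sigma_2(X)}\otimes\mathrm{Ad}_{X^{-1}\sigma_2(X)})(r_{DJ})=r_{DJ}^{21}$ for every $\sigma_2\in\mathrm{Gal}(\overline{\mathbb{K}}/\mathbb{K})$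 whose restriction to $\mathbb{K}[j]$ is the conjugation. *)

theory Defs
  imports "HOL-Algebra.Algebraic_Closure_Type" "Jordan_Normal_Form.Matrix"
begin

text \<open>K = C((h)) is the field of formal Laurent series over the complex numbers;
  its algebraic closure is the type L below, with embedding to_ac.\<close>

type_synonym K = "complex fls"
type_synonym L = "complex fls alg_closure"

definition hbar :: L where "hbar = to_ac fls_X"

text \<open>K[j] inside L, for a chosen square root j of h.\<close>
definition Kj :: "L \<Rightarrow> L set" where
  "Kj j = {to_ac f1 + j * to_ac f2 | f1 f2. True}"

definition conjKj :: "L \<Rightarrow> L \<Rightarrow> L" where
  "conjKj j x = (THE y. \<exists>f1 f2. x = to_ac f1 + j * to_ac f2 \<and> y = to_ac f1 - j * to_ac f2)"

definition field_aut :: "(L \<Rightarrow> L) \<Rightarrow> bool" where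
  "field_aut g \<longleftrightarrow> bij g \<and> (\<forall>x y. g (x + y) = g x + g y) \<and>
     (\<forall>x y. g (x * y) = g x * g y) \<and> g 1 = 1"

definition Gal_Kj :: "L \<Rightarrow> (L \<Rightarrow> L) set" where
  "Gal_Kj j = {g. field_aut g \<and> (\<forall>x \<in> Kj j. g x = x)}"

definition Gal_K_conj :: "L \<Rightarrow> (L \<Rightarrow> L) set" where
  "Gal_K_conj j = {g. field_aut g \<and> (\<forall>f. g (to_ac f) = to_ac f) \<and>
                      (\<forall>x \<in> Kj j. g x = conjKj j x)}"

definition minv :: "nat \<Rightarrow> 'a::semiring_1 mat \<Rightarrow> 'a mat" where
  "minv n A = (SOME B. B \<in> carrier_mat n n \<and> A * B = 1\<^sub>m n \<and> B * A = 1\<^sub>m n)"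

definition GL_over :: "nat \<Rightarrow> 'a::semiring_1 set \<Rightarrow> 'a mat \<Rightarrow> bool" where
  "GL_over n F A \<longleftrightarrow> A \<in> carrier_mat n n \<and> (\<forall>i<n. \<forall>k<n. A $$ (i,k) \<in> F) \<and>
     (\<exists>B. B \<in> carrier_mat n n \<and> (\<forall>i<n. \<forall>k<n. B $$ (i,k) \<in> F) \<and>
          A * B = 1\<^sub>m n \<and> B * A = 1\<^sub>m n)"

text \<open>Tensors in gl_n \<otimes> gl_n, given by their coefficient t a b c d on the basis
  element e_ab \<otimes> e_cd (indices 0..n-1, zero outside).\<close>
type_synonym 'a tens = "nat \<Rightarrow> nat \<Rightarrow> nat \<Rightarrow> nat \<Rightarrow> 'a"

text \<open>(Ad_Y \<otimes> Ad_Y) t, with Ad_Y a = Y a Y^-1, extended bilinearly.\<close>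
definition Ad_tens :: "nat \<Rightarrow> 'a::field mat \<Rightarrow> 'a tens \<Rightarrow> 'a tens" where
  "Ad_tens n Y t = (\<lambda>a b c d. if a < n \<and> b < n \<and> c < n \<and> d < n then
     (\<Sum>i<n. \<Sum>k<n. \<Sum>p<n. \<Sum>q<n. t i k p q * Y $$ (a,i) * minv n Y $$ (k,b)
                                   * Y $$ (c,p) * minv n Y $$ (q,d))
     else 0)"

definition flip_tens :: "'a tens \<Rightarrow> 'a tens" where
  "flip_tens t = (\<lambda>a b c d. t c d a b)"

text \<open>r_DJ = sum_{i<k} e_ik \<otimes> e_ki + 1/2 Omega_0,
  Omega_0 = sum_i e_ii \<otimes> e_ii - 1/n I \<otimes> I.\<close>
definition r_DJ :: "nat \<Rightarrow> 'a::field tens" where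
  "r_DJ n = (\<lambda>a b c d. if a < n \<and> b < n \<and> c < n \<and> d < n then
     (if a < b \<and> c = b \<and> d = a then 1 else 0)
     + (1/2) * ((if a = b \<and> b = c \<and> c = d then 1 else 0)
                - (1 / of_nat n) * (if a = b \<and> c = d then 1 else 0))
     else 0)"

definition BD_twisted_cocycle :: "L \<Rightarrow> nat \<Rightarrow> L mat \<Rightarrow> bool" where
  "BD_twisted_cocycle j n M \<longleftrightarrow> M \<in> carrier_mat n n \<and> invertible_mat M \<and>
     (\<forall>g \<in> Gal_Kj j. Ad_tens n (minv n M * map_mat g M) (r_DJ n) = r_DJ n) \<and>
     (\<forall>g \<in> Gal_K_conj j. Ad_tens n (minv n M * map_mat g M) (r_DJ n) = flip_tens (r_DJ n))"

definition antidiag :: "nat \<Rightarrow> 'a::zero_neq_one mat" where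
  "antidiag n = mat n n (\<lambda>(i,k). if i + k = n - 1 then 1 else 0)"

end

theory Submission
  imports Defs
begin

text \<open>For \<open>\<sigma>\<close> in either Galois group put \<open>Y\<^sub>\<sigma> = X\<^sup>-\<^sup>1 \<sigma>(X)\<close>. Contracting the identity
  \<open>(Ad Y \<otimes> Ad Y) r\<^sub>D\<^sub>J = r\<^sub>D\<^sub>J\<close> against \<open>Y \<otimes> Y\<close> shows that \<open>Y\<close> is monomial with nonzero entries in
  increasing rows, hence diagonal; for \<open>r\<^sub>D\<^sub>J\<^sup>2\<^sup>1\<close> the rows decrease and \<open>Y\<close> is antidiagonal.
  Dividing each column of \<open>X\<close> by one of its nonzero entries gives \<open>X = P D\<close> where every column
  of \<open>P\<close> has an entry \<open>1\<close>. For \<open>\<sigma>\<close> fixing \<open>K[j]\<close>, \<open>\<sigma>(P) = P E\<close> with \<open>E\<close> diagonal, and the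
  entries \<open>1\<close> force \<open>E = 1\<close>; so \<open>P\<close> is fixed by \<open>Gal(L/K[j])\<close>, whose fixed field is \<open>K[j]\<close> by
  the usual extension argument for embeddings into an algebraic closure (in characteristic 0).
  For \<open>\<sigma>\<close> extending the conjugation, \<open>W = P\<^sup>-\<^sup>1 \<sigma>(P)\<close> is antidiagonal, so \<open>D\<^sub>1 = S W\<close> is
  diagonal and \<open>conj(P) = \<sigma>(P) = P S D\<^sub>1\<close> since \<open>S\<^sup>2 = 1\<close>.\<close>

section \<open>Subfields, minimal polynomials and simple extensions\<close>

definition is_subfield :: "'a::field set \<Rightarrow> bool" where
  "is_subfield E \<longleftrightarrow> 0 \<in> E \<and> 1 \<in> E \<and> (\<forall>a\<in>E. \<forall>b\<in>E. a + b \<in> E \<and> a * b \<in> E) \<and>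
     (\<forall>a\<in>E. - a \<in> E \<and> inverse a \<in> E)"

definition poly_over :: "'a::field set \<Rightarrow> 'a poly \<Rightarrow> bool" where
  "poly_over E p \<longleftrightarrow> (\<forall>i. coeff p i \<in> E)"

definition algebraic_over :: "'a::field set \<Rightarrow> 'a \<Rightarrow> bool" where
  "algebraic_over E y \<longleftrightarrow> (\<exists>q. poly_over E q \<and> q \<noteq> 0 \<and> poly q y = 0)"

definition is_min_poly :: "'a::field set \<Rightarrow> 'a \<Rightarrow> 'a poly \<Rightarrow> bool" where
  "is_min_poly E y m \<longleftrightarrow> poly_over E m \<and> lead_coeff m = 1 \<and> poly m y = 0 \<and>
     (\<forall>q. poly_over E q \<and> q \<noteq> 0 \<and> poly q y = 0 \<longrightarrow> degree m \<le> degree q)"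

definition adjoin :: "'a::field set \<Rightarrow> 'a \<Rightarrow> 'a set" where
  "adjoin E y = {poly q y | q. poly_over E q}"

lemma algebraic_over_mono: "E \<subseteq> F \<Longrightarrow> algebraic_over E y \<Longrightarrow> algebraic_over F y"
  unfolding algebraic_over_def poly_over_def by blast

lemma is_subfield_UNIV: "is_subfield (UNIV :: 'a::field set)"
  unfolding is_subfield_def by simp

context
  fixes E :: "'a::field set"
  assumes E: "is_subfield E"
begin

lemma subfield_0: "0 \<in> E" and subfield_1: "1 \<in> E"
  and subfield_add: "a \<in> E \<Longrightarrow> b \<in> E \<Longrightarrow> a + b \<in> E"
  and subfield_mult: "a \<in> E \<Longrightarrow> b \<in> E \<Longrightarrow> a * b \<in> E"
  and subfield_uminus: "a \<in> E \<Longrightarrow> - a \<in> E"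
  and subfield_inverse: "a \<in> E \<Longrightarrow> inverse a \<in> E"
  using E unfolding is_subfield_def by blast+

lemma subfield_diff: "a \<in> E \<Longrightarrow> b \<in> E \<Longrightarrow> a - b \<in> E"
  using subfield_add subfield_uminus by (metis diff_conv_add_uminus)

lemma subfield_divide: "a \<in> E \<Longrightarrow> b \<in> E \<Longrightarrow> a / b \<in> E"
  using subfield_mult subfield_inverse by (metis divide_inverse)

lemma subfield_sum: "(\<And>i. i \<in> I \<Longrightarrow> f i \<in> E) \<Longrightarrow> sum f I \<in> E"
  by (induction I rule: infinite_finite_induct) (auto simp: subfield_0 subfield_add)

lemma subfield_of_nat: "of_nat k \<in> E"
  by (induction k) (auto simp: subfield_0 subfield_1 subfield_add)

lemma poly_over_0: "poly_over E 0"
  by (simp add: poly_over_def subfield_0)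

lemma poly_over_pCons_iff: "poly_over E (pCons a p) \<longleftrightarrow> a \<in> E \<and> poly_over E p"
  unfolding poly_over_def by (auto simp: coeff_pCons split: nat.splits)

lemma poly_over_const: "a \<in> E \<Longrightarrow> poly_over E [:a:]"
  by (simp add: poly_over_pCons_iff poly_over_0)

lemma poly_over_X: "poly_over E [:0, 1:]"
  by (simp add: poly_over_pCons_iff poly_over_0 subfield_0 subfield_1)

lemma poly_over_add: "poly_over E p \<Longrightarrow> poly_over E q \<Longrightarrow> poly_over E (p + q)"
  and poly_over_diff: "poly_over E p \<Longrightarrow> poly_over E q \<Longrightarrow> poly_over E (p - q)"
  and poly_over_uminus: "poly_over E p \<Longrightarrow> poly_over E (- p)"
  and poly_over_smult: "a \<in> E \<Longrightarrow> poly_over E p \<Longrightarrow> poly_over E (smult a p)"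
  and poly_over_monom: "a \<in> E \<Longrightarrow> poly_over E (monom a k)"
  by (simp_all add: poly_over_def coeff_monom subfield_add subfield_diff subfield_uminus
      subfield_mult subfield_0)

lemma poly_over_mult: "poly_over E p \<Longrightarrow> poly_over E q \<Longrightarrow> poly_over E (p * q)"
  unfolding poly_over_def coeff_mult by (auto intro!: subfield_sum subfield_mult)

lemma poly_over_lead_coeff: "poly_over E p \<Longrightarrow> lead_coeff p \<in> E"
  by (simp add: poly_over_def)

lemma poly_in_subfield: "poly_over E p \<Longrightarrow> x \<in> E \<Longrightarrow> poly p x \<in> E"
  by (induction p) (auto simp: poly_over_pCons_iff subfield_0 subfield_add subfield_mult)

lemma min_poly_exists:
  assumes "algebraic_over E y"
  obtains m where "is_min_poly E y m"
proof -
  define P where "P d \<longleftrightarrow> (\<exists>q. poly_over E q \<and> q \<noteq> 0 \<and> poly q y = 0 \<and> degree q = d)" for d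
  have "\<exists>d. P d" using assms unfolding algebraic_over_def P_def by blast
  then have "P (LEAST d. P d)" by (rule LeastI_ex)
  then obtain q where q: "poly_over E q" "q \<noteq> 0" "poly q y = 0" "degree q = (LEAST d. P d)"
    unfolding P_def by blast
  have "(LEAST d. P d) \<le> degree r" if "poly_over E r" "r \<noteq> 0" "poly r y = 0" for r
    using that by (intro Least_le) (auto simp: P_def)
  moreover have "lead_coeff q \<noteq> 0" "lead_coeff q \<in> E"
    using q(1,2) poly_over_lead_coeff by simp_all
  ultimately have "is_min_poly E y (smult (inverse (lead_coeff q)) q)"
    using q by (auto simp: is_min_poly_def intro!: poly_over_smult subfield_inverse)
  then show ?thesis by (rule that)
qed

lemma div_monic_poly_over:
  assumes m: "poly_over E m" "lead_coeff m = 1" and p: "poly_over E p"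
  shows "\<exists>s r. poly_over E s \<and> poly_over E r \<and> p = m * s + r \<and> (r = 0 \<or> degree r < degree m)"
  using p
proof (induction "degree p" arbitrary: p rule: less_induct)
  case less
  show ?case
  proof (cases "p = 0 \<or> degree p < degree m")
    case True
    then show ?thesis using less(2) poly_over_0 by (intro exI[of _ 0] exI[of _ p]) simp
  next
    case False
    then have dp: "degree m \<le> degree p" by auto
    define c where "c = monom (lead_coeff p) (degree p - degree m)"
    have c: "poly_over E c" unfolding c_def
      using less(2) by (intro poly_over_monom poly_over_lead_coeff)
    define p' where "p' = p - c * m"
    have p': "poly_over E p'"
      unfolding p'_def using less(2) m(1) c by (intro poly_over_diff poly_over_mult)
    have "coeff p' i = 0" if "i \<ge> degree p" for i
    proof (cases "i = degree p")
      case False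
      then have "coeff m (i - (degree p - degree m)) = 0"
        using that dp by (intro coeff_eq_0) linarith
      then show ?thesis using that False by (simp add: p'_def c_def coeff_monom_mult coeff_eq_0)
    qed (use dp m(2) in \<open>simp add: p'_def c_def coeff_monom_mult\<close>)
    then have "p' = 0 \<or> degree p' < degree p"
      by (metis leading_coeff_0_iff not_le_imp_less)
    then obtain s r where sr: "poly_over E s" "poly_over E r" "p' = m * s + r"
      "r = 0 \<or> degree r < degree m"
    proof
      assume "p' = 0"
      then show ?thesis using that[of 0 0] poly_over_0 by simp
    qed (use less(1) p' in blast)
    have "p = m * (s + c) + r" using sr(3) unfolding p'_def by (simp add: algebra_simps)
    then show ?thesis using sr(2,4) poly_over_add[OF sr(1) c] by blast
  qed
qed

lemma min_poly_dvd:
  assumes m: "is_min_poly E y m" and q: "poly_over E q" "poly q y = 0"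
  obtains s where "poly_over E s" "q = m * s"
proof -
  from m have mE: "poly_over E m" "lead_coeff m = 1" "poly m y = 0"
    unfolding is_min_poly_def by auto
  obtain s r where sr: "poly_over E s" "poly_over E r" "q = m * s + r" "r = 0 \<or> degree r < degree m"
    using div_monic_poly_over[OF mE(1,2) q(1)] by blast
  have "poly r y = 0" using q(2) sr(3) mE(3) by simp
  have "r = 0"
  proof (rule ccontr)
    assume "r \<noteq> 0"
    then have "degree m \<le> degree r" using m sr(2) \<open>poly r y = 0\<close> unfolding is_min_poly_def by blast
    then show False using sr(4) \<open>r \<noteq> 0\<close> by simp
  qed
  then show ?thesis using sr that by simp
qed

lemma min_poly_degree_pos:
  assumes "is_min_poly E y m"
  shows "degree m > 0"
proof (rule ccontr)
  assume "\<not> degree m > 0"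
  then have "m = [:1:]" using assms unfolding is_min_poly_def by (metis degree_0_id gr0I)
  then show False using assms unfolding is_min_poly_def by simp
qed

lemma subfield_subset_adjoin: "E \<subseteq> adjoin E y"
proof
  fix a assume "a \<in> E"
  then have "poly_over E [:a:] \<and> a = poly [:a:] y" using poly_over_const by simp
  then show "a \<in> adjoin E y" unfolding adjoin_def by blast
qed

lemma mem_adjoin: "y \<in> adjoin E y"
proof -
  have "poly_over E [:0, 1:] \<and> y = poly [:0, 1:] y" using poly_over_X by simp
  then show ?thesis unfolding adjoin_def by blast
qed

lemma adjoin_add: "a \<in> adjoin E y \<Longrightarrow> b \<in> adjoin E y \<Longrightarrow> a + b \<in> adjoin E y"
  and adjoin_mult: "a \<in> adjoin E y \<Longrightarrow> b \<in> adjoin E y \<Longrightarrow> a * b \<in> adjoin E y"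
  and adjoin_uminus: "a \<in> adjoin E y \<Longrightarrow> - a \<in> adjoin E y"
  unfolding adjoin_def
  by (smt (verit) mem_Collect_eq poly_over_add poly_over_mult poly_over_uminus poly_add
      poly_mult poly_minus)+

lemma poly_in_adjoin: "poly_over E h \<Longrightarrow> a \<in> adjoin E y \<Longrightarrow> poly h a \<in> adjoin E y"
  using subfield_subset_adjoin[of y] subfield_0
  by (induction h) (auto simp: poly_over_pCons_iff intro!: adjoin_add adjoin_mult)

text \<open>The inverse of a nonzero algebraic \<open>a\<close> is a polynomial in \<open>a\<close>: read it off the constant
  coefficient of the minimal polynomial, which is nonzero by minimality.\<close>

lemma adjoin_inverse:
  assumes a: "a \<in> adjoin E y" and alg: "algebraic_over E a"
  shows "inverse a \<in> adjoin E y"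
proof (cases "a = 0")
  case True then show ?thesis using subfield_subset_adjoin subfield_0 by auto
next
  case False
  obtain g where g: "is_min_poly E a g" using min_poly_exists[OF alg] by blast
  obtain c g' where cg: "g = pCons c g'" by (cases g)
  have gE: "poly_over E g" "lead_coeff g = 1" "poly g a = 0"
    using g unfolding is_min_poly_def by auto
  have cE: "c \<in> E" "poly_over E g'" using gE(1) unfolding cg poly_over_pCons_iff by auto
  have "c \<noteq> 0"
  proof
    assume c: "c = 0"
    then have "poly g' a = 0" "g' \<noteq> 0" using gE(2,3) False unfolding cg by auto
    then have "degree g \<le> degree g'" using g cE(2) unfolding is_min_poly_def by blast
    then show False using \<open>g' \<noteq> 0\<close> unfolding cg c by simp
  qed
  have "a * poly g' a = - c" using gE(3) unfolding cg by (simp add: eq_neg_iff_add_eq_0 add.commute)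
  then have "a * poly (smult (- inverse c) g') a = 1"
    using \<open>c \<noteq> 0\<close> by (simp add: mult.left_commute[of a])
  then have "inverse a = poly (smult (- inverse c) g') a" by (metis inverse_unique)
  then show ?thesis
    using poly_in_adjoin[OF poly_over_smult[OF subfield_uminus[OF subfield_inverse[OF cE(1)]] cE(2)] a]
    by simp
qed

lemma is_subfield_adjoin: "(\<And>a. algebraic_over E a) \<Longrightarrow> is_subfield (adjoin E y)"
  using subfield_subset_adjoin subfield_0 subfield_1
  by (auto simp: is_subfield_def intro!: adjoin_add adjoin_mult adjoin_uminus adjoin_inverse)

end

section \<open>Extending homomorphisms into an algebraically closed field\<close>

definition field_hom_on :: "'a::field set \<Rightarrow> ('a \<Rightarrow> 'b::field) \<Rightarrow> bool" where
  "field_hom_on E f \<longleftrightarrow> (\<forall>a\<in>E. \<forall>b\<in>E. f (a + b) = f a + f b \<and> f (a * b) = f a * f b) \<and> f 1 = 1"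

context
  fixes E :: "'a::field set" and f :: "'a \<Rightarrow> 'b::field"
  assumes E: "is_subfield E" and f: "field_hom_on E f"
begin

lemma hom_add: "a \<in> E \<Longrightarrow> b \<in> E \<Longrightarrow> f (a + b) = f a + f b"
  and hom_mult: "a \<in> E \<Longrightarrow> b \<in> E \<Longrightarrow> f (a * b) = f a * f b"
  and hom_1: "f 1 = 1"
  using f unfolding field_hom_on_def by blast+

lemma hom_0: "f 0 = 0"
  using hom_add[OF subfield_0[OF E] subfield_0[OF E]] by (metis add.right_neutral add_left_cancel)

lemma hom_uminus: "a \<in> E \<Longrightarrow> f (- a) = - f a"
  using hom_add[OF _ subfield_uminus[OF E], of a a] hom_0 by (simp add: eq_neg_iff_add_eq_0 add.commute)

lemma hom_diff: "a \<in> E \<Longrightarrow> b \<in> E \<Longrightarrow> f (a - b) = f a - f b"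
  using hom_add[OF _ subfield_uminus[OF E], of a b] hom_uminus[of b] by simp

lemma hom_sum: "(\<And>i. i \<in> I \<Longrightarrow> g i \<in> E) \<Longrightarrow> f (sum g I) = (\<Sum>i\<in>I. f (g i))"
  by (induction I rule: infinite_finite_induct) (auto simp: hom_0 hom_add subfield_sum[OF E])

lemma hom_eq_0_iff:
  assumes a: "a \<in> E"
  shows "f a = 0 \<longleftrightarrow> a = 0"
proof
  assume "f a = 0"
  then have "f (a * inverse a) = 0" using hom_mult[OF a subfield_inverse[OF E a]] by simp
  then show "a = 0" using hom_1 by (cases "a = 0") auto
qed (simp add: hom_0)

lemma coeff_map_poly_hom: "coeff (map_poly f p) i = f (coeff p i)"
  by (simp add: coeff_map_poly hom_0)

lemma map_poly_hom_diff: "poly_over E p \<Longrightarrow> poly_over E q \<Longrightarrow>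
    map_poly f (p - q) = map_poly f p - map_poly f q"
  by (rule poly_eqI) (simp add: coeff_map_poly_hom hom_diff poly_over_def)

lemma map_poly_hom_add: "poly_over E p \<Longrightarrow> poly_over E q \<Longrightarrow>
    map_poly f (p + q) = map_poly f p + map_poly f q"
  by (rule poly_eqI) (simp add: coeff_map_poly_hom hom_add poly_over_def)

lemma map_poly_hom_mult: "poly_over E p \<Longrightarrow> poly_over E q \<Longrightarrow>
    map_poly f (p * q) = map_poly f p * map_poly f q"
  by (rule poly_eqI)
    (simp add: coeff_map_poly_hom coeff_mult hom_sum hom_mult poly_over_def subfield_mult[OF E])

lemma map_poly_hom_const: "map_poly f [:a:] = [:f a:]"
  by (rule poly_eqI) (simp add: coeff_map_poly_hom coeff_pCons hom_0 split: nat.splits)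

lemma map_poly_hom_X: "map_poly f [:0, 1:] = [:0, 1:]"
  by (rule poly_eqI) (simp add: coeff_map_poly_hom coeff_pCons hom_0 hom_1 split: nat.splits)

lemma poly_hom: "poly_over E p \<Longrightarrow> x \<in> E \<Longrightarrow> f (poly p x) = poly (map_poly f p) (f x)"
proof (induction p)
  case (pCons a p)
  then have "a \<in> E" "poly p x \<in> E"
    using poly_over_pCons_iff[OF E] poly_in_subfield[OF E] by blast+
  with pCons show ?case
    by (simp add: map_poly_pCons hom_0 poly_over_pCons_iff[OF E] hom_add hom_mult
        subfield_mult[OF E])
qed (simp add: hom_0)

end

text \<open>A homomorphism extends from \<open>E\<close> to \<open>E(y)\<close> by sending \<open>y\<close> to any root \<open>z\<close> of the image of
  the minimal polynomial; this is well defined since polynomials agreeing at \<open>y\<close> differ by a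
  multiple of the minimal polynomial.\<close>

lemma hom_extend_adjoin:
  fixes E :: "'a::field set" and \<phi> :: "'a \<Rightarrow> 'b::field"
  assumes E: "is_subfield E" and h: "field_hom_on E \<phi>" and m: "is_min_poly E y m"
    and z: "poly (map_poly \<phi> m) z = 0"
  obtains \<psi> where "field_hom_on (adjoin E y) \<psi>" "\<forall>a\<in>E. \<psi> a = \<phi> a" "\<psi> y = z"
proof -
  define \<Phi> where "\<Phi> q = poly (map_poly \<phi> q) z" for q
  have well_defined: "\<Phi> p = \<Phi> q" if pq: "poly_over E p" "poly_over E q" "poly p y = poly q y" for p q
  proof -
    obtain s where s: "poly_over E s" "p - q = m * s"
      using min_poly_dvd[OF E m poly_over_diff[OF E pq(1,2)]] pq(3) by auto
    have "poly_over E m" using m unfolding is_min_poly_def by blast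
    then have "map_poly \<phi> p - map_poly \<phi> q = map_poly \<phi> m * map_poly \<phi> s"
      using map_poly_hom_diff[OF E h pq(1,2)] map_poly_hom_mult[OF E h _ s(1)] s(2) by simp
    then have "\<Phi> p - \<Phi> q = 0" unfolding \<Phi>_def using z by (metis mult_zero_left poly_diff poly_mult)
    then show ?thesis by simp
  qed
  define \<psi> where "\<psi> a = \<Phi> (SOME q. poly_over E q \<and> poly q y = a)" for a
  have \<psi>: "\<psi> (poly q y) = \<Phi> q" if "poly_over E q" for q
  proof -
    have "\<exists>q'. poly_over E q' \<and> poly q' y = poly q y" using that by blast
    then have "poly_over E (SOME q'. poly_over E q' \<and> poly q' y = poly q y) \<and>
        poly (SOME q'. poly_over E q' \<and> poly q' y = poly q y) y = poly q y"
      by (rule someI_ex)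
    then show ?thesis unfolding \<psi>_def using well_defined[OF _ that] by blast
  qed
  have "field_hom_on (adjoin E y) \<psi>"
    unfolding field_hom_on_def
  proof (intro conjI ballI)
    fix a b assume "a \<in> adjoin E y" "b \<in> adjoin E y"
    then obtain p q where pq: "poly_over E p" "poly_over E q" "a = poly p y" "b = poly q y"
      unfolding adjoin_def by blast
    have ab: "\<psi> a = \<Phi> p" "\<psi> b = \<Phi> q" using \<psi> pq by simp_all
    have "\<psi> (a + b) = \<Phi> (p + q)" using \<psi>[OF poly_over_add[OF E pq(1,2)]] pq(3,4) by simp
    then show "\<psi> (a + b) = \<psi> a + \<psi> b"
      unfolding ab by (simp add: \<Phi>_def map_poly_hom_add[OF E h pq(1,2)])
    have "\<psi> (a * b) = \<Phi> (p * q)" using \<psi>[OF poly_over_mult[OF E pq(1,2)]] pq(3,4) by simp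
    then show "\<psi> (a * b) = \<psi> a * \<psi> b"
      unfolding ab by (simp add: \<Phi>_def map_poly_hom_mult[OF E h pq(1,2)])
  next
    show "\<psi> 1 = 1"
      using \<psi>[OF poly_over_const[OF E subfield_1[OF E]]] by (simp add: \<Phi>_def map_poly_hom_const[OF E h] hom_1[OF E h])
  qed
  moreover have "\<psi> a = \<phi> a" if "a \<in> E" for a
    using \<psi>[OF poly_over_const[OF E that]] by (simp add: \<Phi>_def map_poly_hom_const[OF E h])
  moreover have "\<psi> y = z"
    using \<psi>[OF poly_over_X[OF E]] by (simp add: \<Phi>_def map_poly_hom_X[OF E h])
  ultimately show ?thesis using that by blast
qed

lemma min_poly_image_has_root:
  fixes \<phi> :: "'a::field \<Rightarrow> 'b::alg_closed_field"
  assumes E: "is_subfield E" and h: "field_hom_on E \<phi>" and m: "is_min_poly E y m"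
  obtains z where "poly (map_poly \<phi> m) z = 0"
proof -
  have "lead_coeff m = 1" using m unfolding is_min_poly_def by blast
  then have "degree (map_poly \<phi> m) = degree m" using hom_1[OF E h] by (intro map_poly_degree_eq) simp
  then have "degree (map_poly \<phi> m) > 0" using min_poly_degree_pos[OF E m] by simp
  then show ?thesis using alg_closed_imp_poly_has_root that by blast
qed

definition graph_on :: "'a set \<Rightarrow> ('a \<Rightarrow> 'b) \<Rightarrow> ('a \<times> 'b) set" where
  "graph_on E f = {(a, f a) | a. a \<in> E}"

definition extends_hom :: "'a::field set \<Rightarrow> ('a \<Rightarrow> 'b::field) \<Rightarrow> ('a \<times> 'b) set \<Rightarrow> bool" where
  "extends_hom E0 \<phi>0 G \<longleftrightarrow> (\<exists>E f. G = graph_on E f \<and> is_subfield E \<and> E0 \<subseteq> E \<and>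
     field_hom_on E f \<and> (\<forall>a\<in>E0. f a = \<phi>0 a))"

lemma chain_subset_Union_pair:
  assumes C: "chain\<^sub>\<subseteq> C" and pq: "p \<in> \<Union>C" "q \<in> \<Union>C"
  obtains G where "G \<in> C" "p \<in> G" "q \<in> G"
proof -
  from pq obtain G H where GH: "G \<in> C" "p \<in> G" "H \<in> C" "q \<in> H" by blast
  moreover have "G \<subseteq> H \<or> H \<subseteq> G" using C GH(1,3) unfolding chain_subset_def by blast
  ultimately show ?thesis using that by blast
qed

lemma chain_Union_graph_on:
  assumes C: "chain\<^sub>\<subseteq> C" and graphs: "\<And>G. G \<in> C \<Longrightarrow> \<exists>E f. G = graph_on E f"
  shows "\<exists>E f. \<Union>C = graph_on E f \<and>
    (\<forall>G\<in>C. \<forall>E' g. G = graph_on E' g \<longrightarrow> (\<forall>x\<in>E'. x \<in> E \<and> f x = g x))"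
proof -
  have unique: "b = c" if abc: "(a, b) \<in> \<Union>C" "(a, c) \<in> \<Union>C" for a b c
  proof -
    obtain G where G: "G \<in> C" "(a, b) \<in> G" "(a, c) \<in> G" using chain_subset_Union_pair[OF C abc] .
    then obtain E' g where "G = graph_on E' g" using graphs by blast
    then show ?thesis using G(2,3) unfolding graph_on_def by blast
  qed
  define E where "E = fst ` \<Union>C"
  define f where "f a = (THE b. (a, b) \<in> \<Union>C)" for a
  have f: "f a = b" if "(a, b) \<in> \<Union>C" for a b
    unfolding f_def using that by (rule the_equality) (rule unique[OF _ that])
  have "\<Union>C = graph_on E f"
  proof (intro equalityI subsetI)
    fix p assume p: "p \<in> \<Union>C"
    then have "p = (fst p, f (fst p))" "fst p \<in> E" using f[of "fst p" "snd p"] unfolding E_def by auto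
    then show "p \<in> graph_on E f" unfolding graph_on_def by blast
  next
    fix p assume "p \<in> graph_on E f"
    then obtain a where "a \<in> E" "p = (a, f a)" unfolding graph_on_def by blast
    moreover have "\<exists>b. (a, b) \<in> \<Union>C" using \<open>a \<in> E\<close> unfolding E_def by force
    then obtain b where "(a, b) \<in> \<Union>C" by blast
    ultimately show "p \<in> \<Union>C" using f by simp
  qed
  moreover have "\<forall>x\<in>E'. x \<in> E \<and> f x = g x" if "G \<in> C" "G = graph_on E' g" for G E' g
  proof
    fix x assume "x \<in> E'"
    then have "(x, g x) \<in> \<Union>C" using that unfolding graph_on_def by blast
    then show "x \<in> E \<and> f x = g x" using f unfolding E_def by (metis fst_conv image_eqI)
  qed
  ultimately show ?thesis by (intro exI[of _ E] exI[of _ f] conjI) blast+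
qed

lemma chain_Union_extends_hom:
  fixes C :: "('a::field \<times> 'b::field) set set"
  assumes C: "C \<noteq> {}" "chain\<^sub>\<subseteq> C" and ext: "\<And>G. G \<in> C \<Longrightarrow> extends_hom E0 \<phi>0 G"
  shows "extends_hom E0 \<phi>0 (\<Union>C)"
proof -
  have graphs: "\<exists>E f. G = graph_on E f" if "G \<in> C" for G
    using ext[OF that] unfolding extends_hom_def by blast
  obtain E f where U: "\<Union>C = graph_on E f"
    and member: "\<forall>G\<in>C. \<forall>E' g. G = graph_on E' g \<longrightarrow> (\<forall>x\<in>E'. x \<in> E \<and> f x = g x)"
    using chain_Union_graph_on[OF C(2) graphs] by blast
  have local: "\<exists>E' g. is_subfield E' \<and> field_hom_on E' g \<and> a \<in> E' \<and> b \<in> E' \<and>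
      (\<forall>x\<in>E'. x \<in> E \<and> f x = g x)" if ab: "a \<in> E" "b \<in> E" for a b
  proof -
    have "(a, f a) \<in> \<Union>C" "(b, f b) \<in> \<Union>C" using ab unfolding U graph_on_def by auto
    then obtain G where G: "G \<in> C" "(a, f a) \<in> G" "(b, f b) \<in> G"
      using chain_subset_Union_pair[OF C(2)] by blast
    then obtain E' g where G_eq: "G = graph_on E' g" and E': "is_subfield E'" "field_hom_on E' g"
      using ext unfolding extends_hom_def by blast
    have "a \<in> E'" "b \<in> E'" using G(2,3) unfolding G_eq graph_on_def by auto
    moreover have "\<forall>x\<in>E'. x \<in> E \<and> f x = g x" using member G(1) G_eq by blast
    ultimately show ?thesis using E' by blast
  qed
  obtain G0 where "G0 \<in> C" using C(1) by blast
  then obtain E1 g1 where E1: "G0 = graph_on E1 g1" "is_subfield E1" "E0 \<subseteq> E1"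
    "field_hom_on E1 g1" "\<forall>a\<in>E0. g1 a = \<phi>0 a"
    using ext unfolding extends_hom_def by blast
  have E1_sub: "\<forall>x\<in>E1. x \<in> E \<and> f x = g1 x" using member \<open>G0 \<in> C\<close> E1(1) by blast
  have "is_subfield E"
    unfolding is_subfield_def
  proof (intro conjI ballI)
    show "0 \<in> E" "1 \<in> E" using E1_sub subfield_0[OF E1(2)] subfield_1[OF E1(2)] by blast+
  next
    fix a b assume "a \<in> E" "b \<in> E"
    then obtain E' g where "is_subfield E'" "a \<in> E'" "b \<in> E'" "\<forall>x\<in>E'. x \<in> E \<and> f x = g x"
      using local by blast
    then show "a + b \<in> E" "a * b \<in> E" using subfield_add subfield_mult by blast+
  next
    fix a assume "a \<in> E"
    then obtain E' g where "is_subfield E'" "a \<in> E'" "\<forall>x\<in>E'. x \<in> E \<and> f x = g x"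
      using local by blast
    then show "- a \<in> E" "inverse a \<in> E" using subfield_uminus subfield_inverse by blast+
  qed
  moreover have "field_hom_on E f"
    unfolding field_hom_on_def
  proof (intro conjI ballI)
    fix a b assume "a \<in> E" "b \<in> E"
    then obtain E' g where E': "is_subfield E'" "field_hom_on E' g" "a \<in> E'" "b \<in> E'"
      and fg: "\<forall>x\<in>E'. x \<in> E \<and> f x = g x"
      using local by blast
    show "f (a + b) = f a + f b"
      using fg E'(3,4) subfield_add[OF E'(1,3,4)] hom_add[OF E'] by simp
    show "f (a * b) = f a * f b"
      using fg E'(3,4) subfield_mult[OF E'(1,3,4)] hom_mult[OF E'] by simp
  next
    show "f 1 = 1" using E1_sub subfield_1[OF E1(2)] hom_1[OF E1(2,4)] by simp
  qed
  moreover have "E0 \<subseteq> E" "\<forall>a\<in>E0. f a = \<phi>0 a" using E1(3,5) E1_sub by auto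
  ultimately show ?thesis unfolding extends_hom_def using U by blast
qed

text \<open>Zorn's lemma yields a maximal extension; it is defined everywhere, since by
  \<open>hom_extend_adjoin\<close> it could otherwise be extended to one more element.\<close>

lemma hom_extend_to_algebraic:
  fixes E0 :: "'a::field set" and \<phi>0 :: "'a \<Rightarrow> 'b::alg_closed_field"
  assumes E0: "is_subfield E0" and alg: "\<And>y. algebraic_over E0 y" and h0: "field_hom_on E0 \<phi>0"
  obtains \<sigma> where "field_hom_on UNIV \<sigma>" "\<forall>a\<in>E0. \<sigma> a = \<phi>0 a"
proof -
  define A where "A = {G. extends_hom E0 \<phi>0 G}"
  have "graph_on E0 \<phi>0 \<in> A" unfolding A_def extends_hom_def using E0 h0 by blast
  moreover have "\<Union>C \<in> A" if "C \<in> chains A" "C \<noteq> {}" for C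
    using that chain_Union_extends_hom unfolding A_def chains_def by blast
  ultimately have "\<forall>C\<in>chains A. \<exists>U\<in>A. \<forall>G\<in>C. G \<subseteq> U" by blast
  then have "\<exists>M\<in>A. \<forall>G\<in>A. M \<subseteq> G \<longrightarrow> G = M" by (rule Zorn_Lemma2)
  then obtain M where M: "M \<in> A" "\<And>G. G \<in> A \<Longrightarrow> M \<subseteq> G \<Longrightarrow> G = M" by blast
  then obtain E f where Mf: "M = graph_on E f" "is_subfield E" "E0 \<subseteq> E" "field_hom_on E f"
    "\<forall>a\<in>E0. f a = \<phi>0 a"
    unfolding A_def extends_hom_def by blast
  have "y \<in> E" for y
  proof (rule ccontr)
    assume y: "y \<notin> E"
    have alg_E: "algebraic_over E a" for a using algebraic_over_mono[OF Mf(3) alg] .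
    obtain m where m: "is_min_poly E y m" using min_poly_exists[OF Mf(2) alg_E] .
    obtain z where "poly (map_poly f m) z = 0" using min_poly_image_has_root[OF Mf(2,4) m] .
    then obtain \<psi> where \<psi>: "field_hom_on (adjoin E y) \<psi>" "\<forall>a\<in>E. \<psi> a = f a"
      using hom_extend_adjoin[OF Mf(2,4) m] by blast
    have sub: "E \<subseteq> adjoin E y" by (rule subfield_subset_adjoin[OF Mf(2)])
    have "\<forall>a\<in>E0. \<psi> a = \<phi>0 a" using \<psi>(2) Mf(3,5) by auto
    then have "graph_on (adjoin E y) \<psi> \<in> A"
      unfolding A_def extends_hom_def using is_subfield_adjoin[OF Mf(2) alg_E] \<psi>(1) Mf(3) sub
      by blast
    moreover have "M \<subseteq> graph_on (adjoin E y) \<psi>"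
      unfolding Mf(1) graph_on_def using \<psi>(2) sub by auto
    ultimately have "graph_on (adjoin E y) \<psi> = graph_on E f" using M(2) Mf(1) by blast
    then show False using y mem_adjoin[OF Mf(2)] unfolding graph_on_def by blast
  qed
  then have "E = UNIV" by blast
  then show ?thesis using that Mf(4,5) by blast
qed

section \<open>Automorphisms of an algebraically closed field\<close>

text \<open>A root of a polynomial with fixed coefficients is mapped to a root, and the roots form a
  finite set on which the injective endomorphism is therefore onto.\<close>

lemma bij_if_fixes_algebraic:
  fixes \<sigma> :: "'a::field \<Rightarrow> 'a"
  assumes h: "field_hom_on UNIV \<sigma>" and alg: "\<And>y. algebraic_over F y" and fixed: "\<forall>a\<in>F. \<sigma> a = a"
  shows "bij \<sigma>"
proof -
  note hom = is_subfield_UNIV h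
  have inj: "inj \<sigma>"
  proof (rule injI)
    fix a b assume "\<sigma> a = \<sigma> b"
    moreover have "\<sigma> (a - b) = \<sigma> a - \<sigma> b" by (rule hom_diff[OF hom UNIV_I UNIV_I])
    ultimately have "\<sigma> (a - b) = 0" by simp
    then show "a = b" using hom_eq_0_iff[OF hom UNIV_I, of "a - b"] by simp
  qed
  have "y \<in> range \<sigma>" for y
  proof -
    obtain q where q: "poly_over F q" "q \<noteq> 0" "poly q y = 0"
      using alg unfolding algebraic_over_def by blast
    have mq: "map_poly \<sigma> q = q"
      using q(1) fixed by (intro poly_eqI) (simp add: coeff_map_poly_hom[OF hom] poly_over_def)
    define R where "R = {x. poly q x = 0}"
    have fin: "finite R" unfolding R_def using poly_roots_finite[OF q(2)] .
    have "\<sigma> ` R \<subseteq> R"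
    proof
      fix w assume "w \<in> \<sigma> ` R"
      then obtain x where "poly q x = 0" "w = \<sigma> x" unfolding R_def by blast
      then have "poly q w = \<sigma> (poly q x)"
        using poly_hom[OF hom, of q x] mq by (simp add: poly_over_def)
      then show "w \<in> R" using \<open>poly q x = 0\<close> hom_0[OF hom] unfolding R_def by simp
    qed
    then have "\<sigma> ` R = R" using endo_inj_surj[OF fin] inj_on_subset[OF inj] by blast
    moreover have "y \<in> R" using q(3) unfolding R_def by simp
    ultimately show ?thesis by blast
  qed
  then show ?thesis using inj by (auto simp: bij_def)
qed

text \<open>In characteristic zero a minimal polynomial with the single root \<open>x\<close> would be
  \<open>(X - x) ^ d\<close>, whose coefficient \<open>-d x\<close> of \<open>X ^ (d - 1)\<close> would put \<open>x\<close> into the subfield.\<close>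

lemma min_poly_other_root:
  fixes F :: "'a::{field_char_0, alg_closed_field} set"
  assumes F: "is_subfield F" and x: "x \<notin> F" and m: "is_min_poly F x m"
  obtains x' where "poly m x' = 0" "x' \<noteq> x"
proof -
  have mF: "poly_over F m" "lead_coeff m = 1" using m unfolding is_min_poly_def by auto
  define d where "d = degree m"
  have d0: "d > 0" using min_poly_degree_pos[OF F m] unfolding d_def .
  obtain A where A: "size A = d" "m = smult (lead_coeff m) (\<Prod>a\<in>#A. [:- a, 1:])"
  proof -
    have "m \<noteq> 0" using mF(2) by auto
    then show ?thesis using alg_closed_imp_factorization[of m] that unfolding d_def by blast
  qed
  show ?thesis
  proof (cases "\<forall>a\<in>#A. a = x")
    case False
    then obtain a where "a \<in># A" "a \<noteq> x" by blast
    moreover have "poly m a = 0"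
      using \<open>a \<in># A\<close> by (subst A(2)) (auto simp: poly_prod_mset prod_mset_zero_iff)
    ultimately show ?thesis using that by blast
  next
    case True
    then have "image_mset (\<lambda>a. [:- a, 1:]) A = replicate_mset d [:- x, 1:]"
      using A(1) image_mset_cong[of A "\<lambda>a. [:- a, 1:]" "\<lambda>_. [:- x, 1:]"]
      by (simp add: image_mset_const_eq)
    then have md: "m = [:- x, 1:] ^ d" using A(2) mF(2) by simp
    have "d choose (d - 1) = d" using binomial_symmetric[of "d - 1" d] d0 by simp
    then have "coeff m (d - 1) = - (of_nat d * x)"
      unfolding md coeff_linear_poly_power[where a = "- x" and b = 1 and n = d and i = "d - 1", OF diff_le_self]
      using d0 by (simp add: Suc_diff_Suc)
    moreover have "coeff m (d - 1) \<in> F" using mF(1) unfolding poly_over_def by blast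
    ultimately have "- coeff m (d - 1) / of_nat d \<in> F"
      by (intro subfield_divide[OF F] subfield_uminus[OF F] subfield_of_nat[OF F])
    then show ?thesis using x d0 \<open>coeff m (d - 1) = - (of_nat d * x)\<close> by simp
  qed
qed

lemma exists_automorphism_moving:
  fixes F :: "'a::{field_char_0, alg_closed_field} set"
  assumes F: "is_subfield F" and alg: "\<And>y. algebraic_over F y" and x: "x \<notin> F"
  obtains \<sigma> where "field_hom_on UNIV \<sigma>" "bij \<sigma>" "\<forall>a\<in>F. \<sigma> a = a" "\<sigma> x \<noteq> x"
proof -
  obtain m where m: "is_min_poly F x m" using min_poly_exists[OF F alg] .
  obtain x' where x': "poly m x' = 0" "x' \<noteq> x" using min_poly_other_root[OF F x m] .
  have hid: "field_hom_on F id" unfolding field_hom_on_def by simp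
  obtain \<psi> where \<psi>: "field_hom_on (adjoin F x) \<psi>" "\<forall>a\<in>F. \<psi> a = a" "\<psi> x = x'"
    using hom_extend_adjoin[OF F hid m, of x'] x'(1) by auto
  have sub: "F \<subseteq> adjoin F x" by (rule subfield_subset_adjoin[OF F])
  obtain \<sigma> where \<sigma>: "field_hom_on UNIV \<sigma>" "\<forall>a\<in>adjoin F x. \<sigma> a = \<psi> a"
    using hom_extend_to_algebraic[OF is_subfield_adjoin[OF F alg] _ \<psi>(1)]
      algebraic_over_mono[OF sub alg] by blast
  have fixed: "\<forall>a\<in>F. \<sigma> a = a" using \<sigma>(2) \<psi>(2) sub by auto
  show ?thesis
  proof (rule that[OF \<sigma>(1) bij_if_fixes_algebraic[OF \<sigma>(1) alg fixed] fixed])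
    show "\<sigma> x \<noteq> x" using \<sigma>(2) mem_adjoin[OF F] \<psi>(3) x'(2) by simp
  qed
qed

section \<open>The quadratic extension \<open>K[j]\<close> and its Galois groups\<close>

lemma fls_square_eq_X_mult_square_imp_zero:
  fixes a b :: "'a::field fls"
  assumes "a ^ 2 = fls_X * b ^ 2"
  shows "a = 0 \<and> b = 0"
proof (cases "b = 0")
  case False
  then have "a \<noteq> 0" using assms by auto
  then have "fls_subdegree (a ^ 2) = 2 * fls_subdegree a"
    by (simp add: power2_eq_square fls_subdegree_mult)
  moreover have "fls_subdegree (fls_X * b ^ 2) = 2 * fls_subdegree b + 1"
    using False by (simp add: power2_eq_square fls_subdegree_mult)
  ultimately have "2 * fls_subdegree a = 2 * fls_subdegree b + 1" using assms by simp
  then show ?thesis by presburger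
qed (use assms in simp)

lemma field_aut_iff: "field_aut g \<longleftrightarrow> field_hom_on UNIV g \<and> bij g"
  unfolding field_aut_def field_hom_on_def by auto

lemma algebraic_over_superset_to_ac:
  assumes "range to_ac \<subseteq> E"
  shows "algebraic_over E (y :: L)"
proof -
  obtain p :: "complex fls poly" where p: "p \<noteq> 0" "poly (map_poly to_ac p) y = 0"
    by (rule alg_closure_algebraic)
  have "poly_over E (map_poly to_ac p)"
    using assms unfolding poly_over_def by (auto simp: coeff_map_poly)
  moreover have "map_poly to_ac p \<noteq> 0" using p(1) by (simp add: map_poly_eq_0_iff)
  ultimately show ?thesis using p(2) unfolding algebraic_over_def by blast
qed

context
  fixes j :: L
  assumes j_sq: "j ^ 2 = hbar"
begin

lemma j_notin_range_to_ac: "j \<notin> range to_ac"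
proof
  assume "j \<in> range to_ac"
  then obtain f where "j = to_ac f" by blast
  then have "to_ac (f ^ 2) = to_ac (fls_X * 1 ^ 2)" using j_sq by (simp add: hbar_def)
  then have "f ^ 2 = fls_X * 1 ^ 2" by (rule injD[OF inj_to_ac])
  from fls_square_eq_X_mult_square_imp_zero[OF this] show False by simp
qed

lemma Kj_coordinates_unique:
  assumes "to_ac f1 + j * to_ac f2 = to_ac g1 + j * to_ac g2"
  shows "f1 = g1 \<and> f2 = g2"
proof (rule ccontr)
  assume "\<not> (f1 = g1 \<and> f2 = g2)"
  then have "f2 \<noteq> g2" using assms by auto
  moreover have "j * to_ac (f2 - g2) = to_ac (g1 - f1)" using assms by (simp add: algebra_simps)
  ultimately have "j = to_ac ((g1 - f1) / (f2 - g2))" by (simp add: field_simps)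
  then show False using j_notin_range_to_ac by blast
qed

lemma conjKj_eq: "conjKj j (to_ac f1 + j * to_ac f2) = to_ac f1 - j * to_ac f2"
  unfolding conjKj_def
proof (rule the_equality)
  fix y assume "\<exists>g1 g2. to_ac f1 + j * to_ac f2 = to_ac g1 + j * to_ac g2 \<and> y = to_ac g1 - j * to_ac g2"
  then obtain g1 g2 where "to_ac f1 + j * to_ac f2 = to_ac g1 + j * to_ac g2" "y = to_ac g1 - j * to_ac g2"
    by blast
  then show "y = to_ac f1 - j * to_ac f2" using Kj_coordinates_unique by blast
qed blast

lemma Kj_memI: "to_ac f1 + j * to_ac f2 \<in> Kj j"
  unfolding Kj_def by blast

lemma Kj_memE:
  assumes "x \<in> Kj j"
  obtains f1 f2 where "x = to_ac f1 + j * to_ac f2"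
  using assms unfolding Kj_def by blast

lemma range_to_ac_subset_Kj: "range to_ac \<subseteq> Kj j"
  using Kj_memI[of _ 0] by auto

lemma Kj_mult_eq: "(to_ac f1 + j * to_ac f2) * (to_ac g1 + j * to_ac g2) =
   to_ac (f1 * g1 + fls_X * f2 * g2) + j * to_ac (f1 * g2 + f2 * g1)"
proof -
  have "(to_ac f1 + j * to_ac f2) * (to_ac g1 + j * to_ac g2) =
     to_ac f1 * to_ac g1 + (j * j) * to_ac f2 * to_ac g2 + j * (to_ac f1 * to_ac g2 + to_ac f2 * to_ac g1)"
    by (simp add: algebra_simps)
  moreover have "j * j = to_ac fls_X" using j_sq by (simp add: power2_eq_square hbar_def)
  ultimately show ?thesis by simp
qed

text \<open>The inverse of \<open>f1 + j f2 \<noteq> 0\<close> is \<open>(f1 - j f2) / N\<close> with the norm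
  \<open>N = f1\<^sup>2 - h f2\<^sup>2\<close>, which is nonzero because \<open>h\<close> is not a square in \<open>K\<close>.\<close>

lemma Kj_inverse:
  assumes x: "x = to_ac f1 + j * to_ac f2" and nz: "f1 \<noteq> 0 \<or> f2 \<noteq> 0"
  shows "inverse x = to_ac (f1 / (f1 ^ 2 - fls_X * f2 ^ 2)) + j * to_ac (- f2 / (f1 ^ 2 - fls_X * f2 ^ 2))"
proof -
  define N where "N = f1 ^ 2 - fls_X * f2 ^ 2"
  have "N \<noteq> 0" using nz fls_square_eq_X_mult_square_imp_zero[of f1 f2] unfolding N_def by auto
  have "f1 * (f1 / N) + fls_X * f2 * (- f2 / N) = (f1 * f1 - fls_X * f2 * f2) / N"
    by (simp add: diff_divide_distrib)
  also have "\<dots> = 1" using \<open>N \<noteq> 0\<close> unfolding N_def by (simp add: power2_eq_square)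
  finally have "f1 * (f1 / N) + fls_X * f2 * (- f2 / N) = 1" .
  moreover have "f1 * (- f2 / N) + f2 * (f1 / N) = 0" by (simp add: field_simps)
  ultimately have "x * (to_ac (f1 / N) + j * to_ac (- f2 / N)) = 1"
    unfolding x Kj_mult_eq by simp
  then show ?thesis unfolding N_def by (metis inverse_unique)
qed

lemma is_subfield_Kj: "is_subfield (Kj j)"
  unfolding is_subfield_def
proof (intro conjI ballI)
  show "0 \<in> Kj j" "1 \<in> Kj j" using range_to_ac_subset_Kj to_ac_0 to_ac_1 by (metis rangeI subsetD)+
next
  fix x y assume "x \<in> Kj j" "y \<in> Kj j"
  then obtain f1 f2 g1 g2 where xy: "x = to_ac f1 + j * to_ac f2" "y = to_ac g1 + j * to_ac g2"
    by (metis Kj_memE)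
  show "x + y \<in> Kj j" using Kj_memI[of "f1 + g1" "f2 + g2"] by (simp add: xy algebra_simps)
  show "x * y \<in> Kj j" unfolding xy Kj_mult_eq by (rule Kj_memI)
next
  fix x assume "x \<in> Kj j"
  then obtain f1 f2 where x: "x = to_ac f1 + j * to_ac f2" by (rule Kj_memE)
  show "- x \<in> Kj j" using Kj_memI[of "- f1" "- f2"] by (simp add: x)
  show "inverse x \<in> Kj j"
  proof (cases "f1 = 0 \<and> f2 = 0")
    case True
    then show ?thesis using Kj_memI[of 0 0] x by simp
  next
    case False
    then have "f1 \<noteq> 0 \<or> f2 \<noteq> 0" by blast
    then show ?thesis by (simp only: Kj_inverse[OF x] Kj_memI)
  qed
qed

lemma field_hom_on_conjKj: "field_hom_on (Kj j) (conjKj j)"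
  unfolding field_hom_on_def
proof (intro conjI ballI)
  fix x y assume "x \<in> Kj j" "y \<in> Kj j"
  then obtain f1 f2 g1 g2 where xy: "x = to_ac f1 + j * to_ac f2" "y = to_ac g1 + j * to_ac g2"
    by (metis Kj_memE)
  show "conjKj j (x + y) = conjKj j x + conjKj j y"
    using conjKj_eq[of "f1 + g1" "f2 + g2"] by (simp add: xy conjKj_eq algebra_simps)
  have "conjKj j x * conjKj j y = (to_ac f1 + j * to_ac (- f2)) * (to_ac g1 + j * to_ac (- g2))"
    by (simp add: xy conjKj_eq)
  also have "\<dots> = conjKj j (x * y)"
    unfolding Kj_mult_eq xy conjKj_eq by (simp add: algebra_simps)
  finally show "conjKj j (x * y) = conjKj j x * conjKj j y" by simp
next
  show "conjKj j 1 = 1" using conjKj_eq[of 1 0] by simp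
qed

lemma conjKj_to_ac: "conjKj j (to_ac f) = to_ac f"
  using conjKj_eq[of f 0] by simp

lemma conjKj_in_Kj: "x \<in> Kj j \<Longrightarrow> conjKj j x \<in> Kj j"
  by (elim Kj_memE) (use Kj_memI[of _ "- _"] in \<open>simp add: conjKj_eq\<close>)

lemma mem_Kj_if_Gal_fixed:
  assumes "\<forall>\<sigma>\<in>Gal_Kj j. \<sigma> x = x"
  shows "x \<in> Kj j"
proof (rule ccontr)
  assume "x \<notin> Kj j"
  then obtain \<sigma> where "field_hom_on UNIV \<sigma>" "bij \<sigma>" "\<forall>a\<in>Kj j. \<sigma> a = a" "\<sigma> x \<noteq> x"
    using exists_automorphism_moving[OF is_subfield_Kj
        algebraic_over_superset_to_ac[OF range_to_ac_subset_Kj]] by blast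
  then show False using assms unfolding Gal_Kj_def field_aut_iff by blast
qed

lemma Gal_K_conj_nonempty:
  obtains \<sigma> where "\<sigma> \<in> Gal_K_conj j"
proof -
  obtain \<sigma> where \<sigma>: "field_hom_on UNIV \<sigma>" "\<forall>a\<in>Kj j. \<sigma> a = conjKj j a"
    using hom_extend_to_algebraic[OF is_subfield_Kj _ field_hom_on_conjKj]
      algebraic_over_superset_to_ac[OF range_to_ac_subset_Kj] by blast
  have "\<sigma> (to_ac f) = to_ac f" for f using \<sigma>(2) Kj_memI[of f 0] conjKj_to_ac[of f] by simp
  then have fixes_K: "\<forall>a\<in>range to_ac. \<sigma> a = a" by blast
  then have "bij \<sigma>"
    using bij_if_fixes_algebraic[OF \<sigma>(1) algebraic_over_superset_to_ac] by blast
  then have "\<sigma> \<in> Gal_K_conj j"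
    unfolding Gal_K_conj_def field_aut_iff using \<sigma> fixes_K by simp
  then show ?thesis by (rule that)
qed

end

section \<open>Matrices\<close>

lemma index_mult_mat_sum:
  fixes A B :: "'a::semiring_1 mat"
  assumes "A \<in> carrier_mat n n" "B \<in> carrier_mat n n" "i < n" "k < n"
  shows "(A * B) $$ (i, k) = (\<Sum>l<n. A $$ (i, l) * B $$ (l, k))"
  using assms by (simp add: index_mult_mat scalar_prod_def atLeast0LessThan)

lemma GL_over_UNIV_iff:
  "GL_over n UNIV A \<longleftrightarrow> A \<in> carrier_mat n n \<and> (\<exists>B\<in>carrier_mat n n. A * B = 1\<^sub>m n \<and> B * A = 1\<^sub>m n)"
  unfolding GL_over_def by auto

lemma GL_overD:
  assumes "GL_over n F A"
  shows "A \<in> carrier_mat n n" "\<forall>i<n. \<forall>k<n. A $$ (i, k) \<in> F"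
  using assms unfolding GL_over_def by simp_all

lemma GL_overI:
  assumes "A \<in> carrier_mat n n" "\<forall>i<n. \<forall>k<n. A $$ (i, k) \<in> F"
    and "B \<in> carrier_mat n n" "\<forall>i<n. \<forall>k<n. B $$ (i, k) \<in> F" "A * B = 1\<^sub>m n" "B * A = 1\<^sub>m n"
  shows "GL_over n F A"
  using assms unfolding GL_over_def by (intro conjI exI[of _ B]) simp_all

lemma GL_over_UNIV_if_invertible_mat:
  fixes A :: "'a::semiring_1 mat"
  assumes A: "A \<in> carrier_mat n n" and "invertible_mat A"
  shows "GL_over n UNIV A"
proof -
  obtain B where B: "A * B = 1\<^sub>m n" "B * A = 1\<^sub>m (dim_row B)"
    using assms unfolding invertible_mat_def inverts_mat_def by auto
  have "dim_col B = n" "dim_row B = n"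
    using arg_cong[OF B(1), of dim_col] arg_cong[OF B(2), of dim_col] A by auto
  then show ?thesis using A B unfolding GL_over_UNIV_iff by (intro conjI bexI[of _ B]) auto
qed

lemma left_inverse_eq_right_inverse:
  fixes A B C :: "'a::semiring_1 mat"
  assumes "A \<in> carrier_mat n n" "B \<in> carrier_mat n n" "C \<in> carrier_mat n n"
    and "B * A = 1\<^sub>m n" "A * C = 1\<^sub>m n"
  shows "B = C"
proof -
  have "B = B * (A * C)" using assms(2,5) by simp
  also have "\<dots> = (B * A) * C" using assms(1-3) by (simp add: assoc_mult_mat)
  also have "\<dots> = C" using assms(3,4) by simp
  finally show ?thesis .
qed

lemma GL_over_minv:
  fixes A :: "'a::semiring_1 mat"
  assumes A: "GL_over n F A"
  shows "minv n A \<in> carrier_mat n n" "A * minv n A = 1\<^sub>m n" "minv n A * A = 1\<^sub>m n"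
    and "GL_over n F (minv n A)"
proof -
  obtain B where B: "B \<in> carrier_mat n n" "\<forall>i<n. \<forall>k<n. B $$ (i, k) \<in> F" "A * B = 1\<^sub>m n" "B * A = 1\<^sub>m n"
    using A unfolding GL_over_def by blast
  have "\<exists>B. B \<in> carrier_mat n n \<and> A * B = 1\<^sub>m n \<and> B * A = 1\<^sub>m n" using B by blast
  then have "minv n A \<in> carrier_mat n n \<and> A * minv n A = 1\<^sub>m n \<and> minv n A * A = 1\<^sub>m n"
    unfolding minv_def by (rule someI_ex)
  then show minv_A: "minv n A \<in> carrier_mat n n" "A * minv n A = 1\<^sub>m n" "minv n A * A = 1\<^sub>m n" by auto
  have A_car: "A \<in> carrier_mat n n" and A_F: "\<forall>i<n. \<forall>k<n. A $$ (i, k) \<in> F"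
    using A unfolding GL_over_def by blast+
  have "minv n A = B" by (rule left_inverse_eq_right_inverse[OF A_car minv_A(1) B(1) minv_A(3) B(3)])
  then show "GL_over n F (minv n A)"
    unfolding GL_over_def using B A_car A_F by (intro conjI exI[of _ A]) simp_all
qed

lemma GL_over_column_nonzero:
  fixes A :: "'a::semiring_1 mat"
  assumes A: "GL_over n F A" and k: "k < n"
  obtains l where "l < n" "A $$ (l, k) \<noteq> 0"
proof -
  have "\<exists>l<n. A $$ (l, k) \<noteq> 0"
  proof (rule ccontr)
    assume "\<not> (\<exists>l<n. A $$ (l, k) \<noteq> 0)"
    moreover have "A \<in> carrier_mat n n" using A unfolding GL_over_def by blast
    ultimately have "(minv n A * A) $$ (k, k) = 0"
      using index_mult_mat_sum[OF GL_over_minv(1)[OF A] _ k k] by simp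
    then show False using GL_over_minv(3)[OF A] k by simp
  qed
  then show ?thesis using that by blast
qed

lemma GL_over_mult:
  fixes A B :: "'a::field mat"
  assumes F: "is_subfield F" and A: "GL_over n F A" and B: "GL_over n F B"
  shows "GL_over n F (A * B)"
proof -
  have entries: "\<forall>i<n. \<forall>k<n. (C1 * C2) $$ (i, k) \<in> F"
    if "GL_over n F C1" "GL_over n F C2" for C1 C2
  proof (intro allI impI)
    fix i k assume ik: "i < n" "k < n"
    note C = GL_overD[OF that(1)] GL_overD[OF that(2)]
    show "(C1 * C2) $$ (i, k) \<in> F" unfolding index_mult_mat_sum[OF C(1) C(3) ik]
      using C(2,4) ik by (intro subfield_sum[OF F] subfield_mult[OF F]) auto
  qed
  note car = GL_overD(1)[OF A] GL_overD(1)[OF B]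
  note minv = GL_over_minv[OF A] GL_over_minv[OF B]
  have "(A * B) * (minv n B * minv n A) = A * (B * minv n B) * minv n A"
    using car minv(1,5) by (simp add: assoc_mult_mat[of _ n n _ n _ n])
  also have "\<dots> = 1\<^sub>m n" using car minv(1,2,6) by simp
  finally have r: "(A * B) * (minv n B * minv n A) = 1\<^sub>m n" .
  have "(minv n B * minv n A) * (A * B) = minv n B * (minv n A * A) * B"
    using car minv(1,5) by (simp add: assoc_mult_mat[of _ n n _ n _ n])
  also have "\<dots> = 1\<^sub>m n" using car minv(3,5,7) by simp
  finally have l: "(minv n B * minv n A) * (A * B) = 1\<^sub>m n" .
  show ?thesis
    by (rule GL_overI[OF _ entries[OF A B] _ entries[OF minv(8) minv(4)] r l])
      (use car minv(1,5) in simp_all)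
qed

lemma antidiag_carrier: "antidiag n \<in> carrier_mat n n"
  by (simp add: antidiag_def)

lemma antidiag_mult_index:
  fixes A :: "'a::semiring_1 mat"
  assumes "A \<in> carrier_mat n n" "i < n" "k < n"
  shows "(antidiag n * A) $$ (i, k) = A $$ (n - 1 - i, k)"
proof -
  have "(antidiag n * A) $$ (i, k) = (\<Sum>l<n. if l = n - 1 - i then A $$ (l, k) else 0)"
    unfolding index_mult_mat_sum[OF antidiag_carrier assms]
    using assms(2) by (intro sum.cong) (auto simp: antidiag_def)
  then show ?thesis using assms(2) by simp
qed

lemma antidiag_mult_antidiag: "antidiag n * antidiag n = (1\<^sub>m n :: 'a::semiring_1 mat)"
proof (rule eq_matI)
  fix i k assume "i < dim_row (1\<^sub>m n :: 'a mat)" "k < dim_col (1\<^sub>m n :: 'a mat)"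
  then have ik: "i < n" "k < n" by simp_all
  have "(antidiag n * antidiag n) $$ (i, k) = (antidiag n :: 'a mat) $$ (n - 1 - i, k)"
    by (rule antidiag_mult_index[OF antidiag_carrier ik])
  also have "\<dots> = (if i = k then 1 else 0)" using ik by (simp add: antidiag_def) linarith
  finally show "(antidiag n * antidiag n) $$ (i, k) = (1\<^sub>m n :: 'a mat) $$ (i, k)" using ik by simp
qed (simp_all add: antidiag_def)

lemma GL_over_antidiag:
  assumes "0 \<in> F" "1 \<in> F"
  shows "GL_over n F (antidiag n :: 'a::semiring_1 mat)"
proof -
  have "\<forall>i<n. \<forall>k<n. (antidiag n :: 'a mat) $$ (i, k) \<in> F"
    using assms by (simp add: antidiag_def)
  then show ?thesis
    by (intro GL_overI[where B = "antidiag n"] antidiag_carrier antidiag_mult_antidiag)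
qed

definition diag_matrix :: "nat \<Rightarrow> (nat \<Rightarrow> 'a::zero) \<Rightarrow> 'a mat" where
  "diag_matrix n d = mat n n (\<lambda>(i, k). if i = k then d k else 0)"

definition antidiagonal_mat :: "nat \<Rightarrow> 'a::zero mat \<Rightarrow> bool" where
  "antidiagonal_mat n A \<longleftrightarrow> (\<forall>i<n. \<forall>k<n. i + k \<noteq> n - 1 \<longrightarrow> A $$ (i, k) = 0)"

lemma diag_matrix_carrier: "diag_matrix n d \<in> carrier_mat n n"
  by (simp add: diag_matrix_def)

lemma diagonal_mat_diag_matrix: "diagonal_mat (diag_matrix n d)"
  by (simp add: diagonal_mat_def diag_matrix_def)

lemma diagonal_matD: "diagonal_mat A \<Longrightarrow> A \<in> carrier_mat n n \<Longrightarrow> i < n \<Longrightarrow> k < n \<Longrightarrow> i \<noteq> k \<Longrightarrow>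
    A $$ (i, k) = 0"
  unfolding diagonal_mat_def by simp

lemma mult_diagonal_index:
  fixes A D :: "'a::semiring_1 mat"
  assumes A: "A \<in> carrier_mat n n" and D: "D \<in> carrier_mat n n" "diagonal_mat D"
    and ik: "i < n" "k < n"
  shows "(A * D) $$ (i, k) = A $$ (i, k) * D $$ (k, k)"
    and "(D * A) $$ (i, k) = D $$ (i, i) * A $$ (i, k)"
proof -
  have "(A * D) $$ (i, k) = (\<Sum>l<n. if l = k then A $$ (i, l) * D $$ (l, k) else 0)"
    unfolding index_mult_mat_sum[OF A D(1) ik] using diagonal_matD[OF D(2,1)] ik
    by (intro sum.cong) auto
  then show "(A * D) $$ (i, k) = A $$ (i, k) * D $$ (k, k)" using ik by simp
  have "(D * A) $$ (i, k) = (\<Sum>l<n. if l = i then D $$ (i, l) * A $$ (l, k) else 0)"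
    unfolding index_mult_mat_sum[OF D(1) A ik] using diagonal_matD[OF D(2,1)] ik
    by (intro sum.cong) auto
  then show "(D * A) $$ (i, k) = D $$ (i, i) * A $$ (i, k)" using ik by simp
qed

lemma diagonal_mat_mult:
  fixes A B :: "'a::semiring_1 mat"
  assumes "A \<in> carrier_mat n n" "diagonal_mat A" "B \<in> carrier_mat n n" "diagonal_mat B"
  shows "diagonal_mat (A * B)"
  unfolding diagonal_mat_def
proof (intro allI impI)
  fix i k assume "i < dim_row (A * B)" "k < dim_col (A * B)" "i \<noteq> k"
  then have ik: "i < n" "k < n" "i \<noteq> k" using assms(1,3) by auto
  then show "(A * B) $$ (i, k) = 0"
    using mult_diagonal_index(1)[OF assms(1,3,4) ik(1,2)] diagonal_matD[OF assms(2,1) ik] by simp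
qed

lemma antidiagonal_mat_mult_diagonal:
  fixes A D1 D2 :: "'a::semiring_1 mat"
  assumes A: "A \<in> carrier_mat n n" "antidiagonal_mat n A"
    and D1: "D1 \<in> carrier_mat n n" "diagonal_mat D1" and D2: "D2 \<in> carrier_mat n n" "diagonal_mat D2"
  shows "antidiagonal_mat n (D1 * A * D2)"
  unfolding antidiagonal_mat_def
proof (intro allI impI)
  fix i k assume ik: "i < n" "k < n" "i + k \<noteq> n - 1"
  have "(D1 * A * D2) $$ (i, k) = D1 $$ (i, i) * A $$ (i, k) * D2 $$ (k, k)"
    using mult_diagonal_index(1)[OF _ D2 ik(1,2), of "D1 * A"] mult_diagonal_index(2)[OF A(1) D1 ik(1,2)]
      A(1) D1(1) by simp
  then show "(D1 * A * D2) $$ (i, k) = 0" using A(2) ik unfolding antidiagonal_mat_def by simp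
qed

lemma diagonal_mat_antidiag_mult:
  fixes A :: "'a::semiring_1 mat"
  assumes "A \<in> carrier_mat n n" "antidiagonal_mat n A"
  shows "diagonal_mat (antidiag n * A)"
  unfolding diagonal_mat_def
proof (intro allI impI)
  fix i k assume "i < dim_row (antidiag n * A)" "k < dim_col (antidiag n * A)" "i \<noteq> k"
  then have "i < n" "k < n" "(n - 1 - i) + k \<noteq> n - 1" using assms(1) by (auto simp: antidiag_def)
  then show "(antidiag n * A) $$ (i, k) = 0"
    using assms by (simp add: antidiag_mult_index antidiagonal_mat_def)
qed

lemma diag_matrix_mult: "diag_matrix n f * diag_matrix n h = diag_matrix n (\<lambda>k. f k * h k :: 'a::semiring_1)"
proof (rule eq_matI)
  fix i k assume "i < dim_row (diag_matrix n (\<lambda>k. f k * h k))" "k < dim_col (diag_matrix n (\<lambda>k. f k * h k))"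
  then have ik: "i < n" "k < n" by (simp_all add: diag_matrix_def)
  show "(diag_matrix n f * diag_matrix n h) $$ (i, k) = diag_matrix n (\<lambda>k. f k * h k) $$ (i, k)"
    unfolding mult_diagonal_index(1)[OF diag_matrix_carrier diag_matrix_carrier diagonal_mat_diag_matrix ik]
    using ik by (simp add: diag_matrix_def)
qed (simp_all add: diag_matrix_def)

lemma diag_matrix_mult_inverse:
  fixes d :: "nat \<Rightarrow> 'a::field"
  assumes "\<forall>k<n. d k \<noteq> 0"
  shows "diag_matrix n d * diag_matrix n (\<lambda>k. inverse (d k)) = 1\<^sub>m n"
    and "diag_matrix n (\<lambda>k. inverse (d k)) * diag_matrix n d = 1\<^sub>m n"
  unfolding diag_matrix_mult using assms by (auto intro!: eq_matI simp: diag_matrix_def)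

lemma GL_over_diag_matrix:
  fixes d :: "nat \<Rightarrow> 'a::field"
  assumes "\<forall>k<n. d k \<noteq> 0"
  shows "GL_over n UNIV (diag_matrix n d)"
  unfolding GL_over_UNIV_iff using diag_matrix_mult_inverse[OF assms]
  by (intro conjI diag_matrix_carrier bexI[OF _ diag_matrix_carrier]) blast

lemma semiring_hom_field_aut: "field_aut g \<Longrightarrow> semiring_hom g"
  using hom_0[OF is_subfield_UNIV] unfolding field_aut_iff field_hom_on_def
  by unfold_locales auto

lemma map_mat_mult_field_aut:
  "field_aut g \<Longrightarrow> A \<in> carrier_mat n n \<Longrightarrow> B \<in> carrier_mat n n \<Longrightarrow>
    map_mat g (A * B) = map_mat g A * map_mat g B"
  using semiring_hom.mat_hom_mult[OF semiring_hom_field_aut] by blast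

lemma map_mat_one_field_aut: "field_aut g \<Longrightarrow> map_mat g (1\<^sub>m n) = 1\<^sub>m n"
  using semiring_hom.mat_hom_one[OF semiring_hom_field_aut] by blast

lemma diagonal_mat_map_mat_field_aut:
  assumes "field_aut g" "diagonal_mat A"
  shows "diagonal_mat (map_mat g A)"
proof -
  have "g 0 = 0" using hom_0[OF is_subfield_UNIV] assms(1) unfolding field_aut_iff by blast
  then show ?thesis using assms(2) unfolding diagonal_mat_def by simp
qed

lemma GL_over_map_mat:
  assumes g: "field_aut g" and gF: "\<forall>x\<in>F. g x \<in> F" and A: "GL_over n F A"
  shows "GL_over n F (map_mat g A)"
proof -
  note minv = GL_over_minv[OF A]
  note car = GL_overD[OF A] and minv_car = GL_overD[OF minv(4)]
  have prods: "map_mat g A * map_mat g (minv n A) = 1\<^sub>m n" "map_mat g (minv n A) * map_mat g A = 1\<^sub>m n"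
    using map_mat_mult_field_aut[OF g] map_mat_one_field_aut[OF g] car(1) minv(1-3) by metis+
  show ?thesis
    by (rule GL_overI[OF _ _ _ _ prods]) (use car minv_car gF in auto)
qed

lemma map_mat_minv:
  assumes g: "field_aut g" and A: "GL_over n UNIV A"
  shows "map_mat g (minv n A) = minv n (map_mat g A)"
proof -
  note minv = GL_over_minv[OF A] and gA = GL_over_minv[OF GL_over_map_mat[OF g _ A]]
  have "A \<in> carrier_mat n n" using GL_overD(1)[OF A] .
  then have "map_mat g (minv n A) * map_mat g A = 1\<^sub>m n"
    using map_mat_mult_field_aut[OF g] map_mat_one_field_aut[OF g] minv(1,3) by metis
  moreover have "map_mat g A \<in> carrier_mat n n" using \<open>A \<in> carrier_mat n n\<close> by simp
  ultimately show ?thesis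
    using left_inverse_eq_right_inverse[of "map_mat g A" n] minv(1) gA(1,2) by simp
qed

lemma cocycle_twist:
  assumes g: "field_aut g" and M: "GL_over n UNIV M"
  shows "GL_over n UNIV (minv n M * map_mat g M)" "M * (minv n M * map_mat g M) = map_mat g M"
proof -
  note minv = GL_over_minv[OF M]
  show "GL_over n UNIV (minv n M * map_mat g M)"
    by (rule GL_over_mult[OF is_subfield_UNIV minv(4) GL_over_map_mat[OF g _ M]]) simp
  have "M \<in> carrier_mat n n" using GL_overD(1)[OF M] .
  then show "M * (minv n M * map_mat g M) = map_mat g M"
    using minv(1,2) by (simp add: assoc_mult_mat[of M n n _ n _ n, symmetric])
qed

lemma column_normalization:
  fixes M :: "'a::field mat"
  assumes M: "GL_over n UNIV M"
  obtains P d piv where "M = P * diag_matrix n d" "P = M * diag_matrix n (\<lambda>k. inverse (d k))"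
    "\<forall>k<n. d k \<noteq> 0" "\<forall>k<n. piv k < n \<and> P $$ (piv k, k) = 1"
proof -
  have M_car: "M \<in> carrier_mat n n" using GL_overD(1)[OF M] .
  define piv where "piv k = (SOME l. l < n \<and> M $$ (l, k) \<noteq> 0)" for k
  have piv: "piv k < n \<and> M $$ (piv k, k) \<noteq> 0" if "k < n" for k
    using GL_over_column_nonzero[OF M that] unfolding piv_def by (metis (mono_tags, lifting) someI)
  define d where "d k = M $$ (piv k, k)" for k
  define Dinv where "Dinv = diag_matrix n (\<lambda>k. inverse (d k))"
  have d: "\<forall>k<n. d k \<noteq> 0" using piv unfolding d_def by blast
  define P where "P = M * Dinv"
  have "P * diag_matrix n d = M * (Dinv * diag_matrix n d)"
    unfolding P_def Dinv_def by (rule assoc_mult_mat[OF M_car diag_matrix_carrier diag_matrix_carrier])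
  then have "M = P * diag_matrix n d"
    using diag_matrix_mult_inverse(2)[OF d] M_car unfolding Dinv_def by simp
  moreover have "P $$ (piv k, k) = 1" if "k < n" for k
    using piv[OF that] that d M_car unfolding P_def Dinv_def d_def
    by (simp add: mult_diagonal_index diag_matrix_carrier diagonal_mat_diag_matrix)
      (simp add: diag_matrix_def)
  ultimately show ?thesis using that d piv P_def Dinv_def by blast
qed

lemma map_mat_normalized_factor:
  assumes g: "field_aut g" and M: "M \<in> carrier_mat n n"
    and D: "D \<in> carrier_mat n n" and Dinv: "Dinv \<in> carrier_mat n n"
    and P: "P = M * Dinv" and MPD: "M = P * D"
    and Y: "Y \<in> carrier_mat n n" "map_mat g M = M * Y"
  shows "map_mat g P = P * (D * Y * map_mat g Dinv)"
proof -
  have P_car: "P \<in> carrier_mat n n" using P M Dinv by simp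
  have "map_mat g P = map_mat g M * map_mat g Dinv"
    unfolding P by (rule map_mat_mult_field_aut[OF g M Dinv])
  also have "\<dots> = P * D * Y * map_mat g Dinv" using Y(2) MPD by simp
  also have "\<dots> = P * (D * Y * map_mat g Dinv)"
    using P_car D Y(1) Dinv by (simp add: assoc_mult_mat[of _ n n _ n _ n])
  finally show ?thesis .
qed

text \<open>If a diagonal twist \<open>E\<close> keeps the normalized entries equal to \<open>1\<close>, then \<open>E = 1\<close>.\<close>

lemma map_mat_eq_if_twist_diagonal:
  assumes g: "field_aut g" and P: "P \<in> carrier_mat n n"
    and piv: "\<forall>k<n. piv k < n \<and> P $$ (piv k, k) = 1"
    and E: "E \<in> carrier_mat n n" "diagonal_mat E" and twist: "map_mat g P = P * E"
  shows "map_mat g P = P"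
proof -
  have "E $$ (k, k) = 1" if k: "k < n" for k
  proof -
    have "g 1 = 1" using g unfolding field_aut_def by blast
    then have "1 = map_mat g P $$ (piv k, k)" using piv P k by simp
    also have "\<dots> = E $$ (k, k)"
      using twist piv k mult_diagonal_index(1)[OF P E, of "piv k" k] by simp
    finally show ?thesis by simp
  qed
  then have "E = 1\<^sub>m n" using E diagonal_matD[OF E(2,1)] by (intro eq_matI) auto
  then show ?thesis using twist P by simp
qed

lemma normalized_factor_twist:
  assumes g: "field_aut g" and M: "GL_over n UNIV M"
    and norm: "M = P * diag_matrix n d" "P = M * diag_matrix n (\<lambda>k. inverse (d k))"
  obtains W where "W \<in> carrier_mat n n" "map_mat g P = P * W"
    "diagonal_mat (minv n M * map_mat g M) \<Longrightarrow> diagonal_mat W"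
    "antidiagonal_mat n (minv n M * map_mat g M) \<Longrightarrow> antidiagonal_mat n W"
proof -
  define Y where "Y = minv n M * map_mat g M"
  define D where "D = diag_matrix n d"
  define Dinv where "Dinv = diag_matrix n (\<lambda>k. inverse (d k))"
  have Y: "Y \<in> carrier_mat n n" "map_mat g M = M * Y"
    using GL_overD(1)[OF cocycle_twist(1)[OF g M]] cocycle_twist(2)[OF g M] unfolding Y_def by simp_all
  have D: "D \<in> carrier_mat n n" "diagonal_mat D" "map_mat g Dinv \<in> carrier_mat n n"
    "diagonal_mat (map_mat g Dinv)"
    unfolding D_def Dinv_def
    by (simp_all add: diag_matrix_carrier diagonal_mat_diag_matrix diagonal_mat_map_mat_field_aut[OF g])
  have "map_mat g P = P * (D * Y * map_mat g Dinv)"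
    using map_mat_normalized_factor[OF g GL_overD(1)[OF M] D(1) _ norm(2) _ Y] norm(1)
    unfolding D_def Dinv_def by (simp add: diag_matrix_carrier)
  moreover have "D * Y * map_mat g Dinv \<in> carrier_mat n n" using D Y by simp
  moreover have "diagonal_mat (D * Y * map_mat g Dinv)" if "diagonal_mat Y"
    using D Y that by (intro diagonal_mat_mult[of _ n]) simp_all
  moreover have "antidiagonal_mat n (D * Y * map_mat g Dinv)" if "antidiagonal_mat n Y"
    using D Y that by (intro antidiagonal_mat_mult_diagonal) simp_all
  ultimately show ?thesis using that unfolding Y_def by blast
qed

section \<open>Tensors invariant under \<open>Ad\<close>\<close>

lemma sum_if_eq_const: "(\<Sum>p\<in>P. if k = b then f p else 0) = (if k = b then sum f P else 0)"
  by simp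

lemma sum_Ad_tens_rearrange:
  fixes t :: "nat \<Rightarrow> nat \<Rightarrow> nat \<Rightarrow> nat \<Rightarrow> 'a::comm_ring_1"
  shows "(\<Sum>b\<in>B. \<Sum>d\<in>D. (\<Sum>i\<in>I. \<Sum>k\<in>K. \<Sum>p\<in>Q. \<Sum>q\<in>R. t i k p q * ya i * z k b * yc p * z q d) * u b * v d)
    = (\<Sum>i\<in>I. \<Sum>k\<in>K. \<Sum>p\<in>Q. \<Sum>q\<in>R. t i k p q * ya i * yc p * (\<Sum>b\<in>B. z k b * u b) * (\<Sum>d\<in>D. z q d * v d))"
proof -
  have "(\<Sum>b\<in>B. \<Sum>d\<in>D. (\<Sum>i\<in>I. \<Sum>k\<in>K. \<Sum>p\<in>Q. \<Sum>q\<in>R. t i k p q * ya i * z k b * yc p * z q d) * u b * v d)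
     = (\<Sum>b\<in>B. \<Sum>d\<in>D. \<Sum>i\<in>I. \<Sum>k\<in>K. \<Sum>p\<in>Q. \<Sum>q\<in>R. t i k p q * ya i * z k b * yc p * z q d * u b * v d)"
    by (simp only: sum_distrib_right)
  also have "\<dots> = (\<Sum>i\<in>I. \<Sum>k\<in>K. \<Sum>p\<in>Q. \<Sum>q\<in>R. \<Sum>d\<in>D. \<Sum>b\<in>B. t i k p q * ya i * z k b * yc p * z q d * u b * v d)"
    by (simp only: sum.swap[where A = D], simp only: sum.swap[where A = B])
  also have "\<dots> = (\<Sum>i\<in>I. \<Sum>k\<in>K. \<Sum>p\<in>Q. \<Sum>q\<in>R. \<Sum>d\<in>D. \<Sum>b\<in>B. t i k p q * ya i * yc p * (z k b * u b) * (z q d * v d))"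
    by (intro sum.cong refl) (simp add: mult_ac)
  also have "\<dots> = (\<Sum>i\<in>I. \<Sum>k\<in>K. \<Sum>p\<in>Q. \<Sum>q\<in>R. t i k p q * ya i * yc p * (\<Sum>b\<in>B. z k b * u b) * (\<Sum>d\<in>D. z q d * v d))"
    by (simp only: sum_distrib_left sum_distrib_right)
  finally show ?thesis .
qed

text \<open>Multiplying \<open>(Ad\<^sub>Y \<otimes> Ad\<^sub>Y) T = T'\<close> on the right by \<open>Y \<otimes> Y\<close> removes \<open>Y\<^sup>-\<^sup>1\<close>:
  the resulting identity is bilinear in the entries of \<open>Y\<close>.\<close>

lemma Ad_tens_eq_contract:
  fixes Y :: "'a::field mat" and T T' :: "'a tens"
  assumes Y: "GL_over n UNIV Y" and ad: "Ad_tens n Y T = T'"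
    and idx: "a < n" "c < n" "b' < n" "d' < n"
  shows "(\<Sum>i<n. \<Sum>p<n. T i b' p d' * (Y $$ (a, i) * Y $$ (c, p))) =
         (\<Sum>b<n. \<Sum>d<n. T' a b c d * (Y $$ (b, b') * Y $$ (d, d')))"
proof -
  define Z where "Z = minv n Y"
  have Y_car: "Y \<in> carrier_mat n n" using GL_overD(1)[OF Y] .
  have ZY: "(\<Sum>b<n. Z $$ (k, b) * Y $$ (b, b2)) = (if k = b2 then 1 else 0)"
    if "k < n" "b2 < n" for k b2
    using index_mult_mat_sum[OF GL_over_minv(1)[OF Y] Y_car that] GL_over_minv(3)[OF Y] that
    unfolding Z_def by simp
  have "(\<Sum>b<n. \<Sum>d<n. T' a b c d * (Y $$ (b, b') * Y $$ (d, d'))) =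
        (\<Sum>b<n. \<Sum>d<n. (\<Sum>i<n. \<Sum>k<n. \<Sum>p<n. \<Sum>q<n. T i k p q * Y $$ (a, i) * Z $$ (k, b)
            * Y $$ (c, p) * Z $$ (q, d)) * Y $$ (b, b') * Y $$ (d, d'))"
    unfolding ad[symmetric] Ad_tens_def Z_def using idx by (intro sum.cong refl) (simp add: mult.assoc)
  also have "\<dots> = (\<Sum>i<n. \<Sum>k<n. \<Sum>p<n. \<Sum>q<n. T i k p q * Y $$ (a, i) * Y $$ (c, p) *
        (\<Sum>b<n. Z $$ (k, b) * Y $$ (b, b')) * (\<Sum>d<n. Z $$ (q, d) * Y $$ (d, d')))"
    by (rule sum_Ad_tens_rearrange)
  also have "\<dots> = (\<Sum>i<n. \<Sum>k<n. \<Sum>p<n. \<Sum>q<n. T i k p q * Y $$ (a, i) * Y $$ (c, p) *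
        (if k = b' then 1 else 0) * (if q = d' then 1 else 0))"
    using idx by (intro sum.cong refl) (simp only: ZY lessThan_iff)
  also have "\<dots> = (\<Sum>i<n. \<Sum>p<n. T i b' p d' * (Y $$ (a, i) * Y $$ (c, p)))"
    using idx by (simp add: if_distrib[of "\<lambda>x. _ * x"] sum_if_eq_const mult.assoc cong: if_cong)
  finally show ?thesis by simp
qed

lemma r_DJ_contract_right:
  fixes W :: "nat \<Rightarrow> nat \<Rightarrow> 'a::field_char_0"
  assumes "a < n" "c < n"
  shows "(\<Sum>b<n. \<Sum>d<n. r_DJ n a b c d * W b d) =
    (if a < c then W c a else 0) + (if a = c then W a a / 2 else 0) - W a c / (2 * of_nat n)"
proof -
  have "(\<Sum>b<n. \<Sum>d<n. r_DJ n a b c d * W b d) =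
    (\<Sum>b<n. \<Sum>d<n. (if b = c then (if d = a then (if a < c then W c a else 0) else 0) else 0)
       + (if b = a then (if d = a then (if c = a then W a a / 2 else 0) else 0) else 0)
       - (if b = a then (if d = c then W a c / (2 * of_nat n) else 0) else 0))"
    using assms by (intro sum.cong refl) (auto simp: r_DJ_def field_simps)
  also have "\<dots> = (if a < c then W c a else 0) + (if a = c then W a a / 2 else 0) - W a c / (2 * of_nat n)"
    using assms by (simp add: sum.distrib sum_subtractf sum_if_eq_const)
  finally show ?thesis .
qed

lemma flip_r_DJ_contract_right:
  fixes W :: "nat \<Rightarrow> nat \<Rightarrow> 'a::field_char_0"
  assumes "a < n" "c < n"
  shows "(\<Sum>b<n. \<Sum>d<n. flip_tens (r_DJ n) a b c d * W b d) =
    (if c < a then W c a else 0) + (if a = c then W a a / 2 else 0) - W a c / (2 * of_nat n)"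
proof -
  have "(\<Sum>b<n. \<Sum>d<n. flip_tens (r_DJ n) a b c d * W b d) =
    (\<Sum>b<n. \<Sum>d<n. (if b = c then (if d = a then (if c < a then W c a else 0) else 0) else 0)
       + (if b = a then (if d = a then (if c = a then W a a / 2 else 0) else 0) else 0)
       - (if b = a then (if d = c then W a c / (2 * of_nat n) else 0) else 0))"
    using assms by (intro sum.cong refl) (auto simp: r_DJ_def flip_tens_def field_simps)
  also have "\<dots> = (if c < a then W c a else 0) + (if a = c then W a a / 2 else 0) - W a c / (2 * of_nat n)"
    using assms by (simp add: sum.distrib sum_subtractf sum_if_eq_const)
  finally show ?thesis .
qed

lemma r_DJ_contract_left:
  fixes W :: "nat \<Rightarrow> nat \<Rightarrow> 'a::field_char_0"
  assumes "b < n" "d < n"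
  shows "(\<Sum>i<n. \<Sum>p<n. r_DJ n i b p d * W i p) =
    (if d < b then W d b else 0) + (if b = d then W b b / 2 else 0) - W b d / (2 * of_nat n)"
proof -
  have "(\<Sum>i<n. \<Sum>p<n. r_DJ n i b p d * W i p) =
    (\<Sum>i<n. \<Sum>p<n. (if i = d then (if p = b then (if d < b then W d b else 0) else 0) else 0)
       + (if i = b then (if p = b then (if d = b then W b b / 2 else 0) else 0) else 0)
       - (if i = b then (if p = d then W b d / (2 * of_nat n) else 0) else 0))"
    using assms by (intro sum.cong refl) (auto simp: r_DJ_def field_simps)
  also have "\<dots> = (if d < b then W d b else 0) + (if b = d then W b b / 2 else 0) - W b d / (2 * of_nat n)"
    using assms by (simp add: sum.distrib sum_subtractf sum_if_eq_const)
  finally show ?thesis .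
qed

lemma strict_mono_self_map_eq_id:
  fixes \<rho> :: "nat \<Rightarrow> nat"
  assumes range: "\<And>m. m < n \<Longrightarrow> \<rho> m < n"
    and mono: "\<And>m1 m2. m1 < m2 \<Longrightarrow> m2 < n \<Longrightarrow> \<rho> m1 < \<rho> m2" and m: "m < n"
  shows "\<rho> m = m"
proof -
  have up: "\<rho> l + k \<le> \<rho> (l + k)" if "l + k < n" for l k
    using that
  proof (induction k)
    case (Suc k)
    then show ?case using mono[of "l + k" "l + Suc k"] by simp
  qed simp
  have "\<rho> 0 + m \<le> \<rho> m" "\<rho> m + (n - 1 - m) \<le> \<rho> (n - 1)" "\<rho> (n - 1) < n"
    using up[of 0 m] up[of m "n - 1 - m"] range[of "n - 1"] m by simp_all
  then show ?thesis by linarith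
qed

text \<open>Contracting the twisted-invariance identity in two ways shows that \<open>Y\<close> is monomial:
  distinct entries of one column have vanishing product, and the row positions of the
  nonzero entries increase along \<open>lt\<close>, the order in which the tensor \<open>T'\<close> pairs indices.\<close>

lemma Ad_r_DJ_monomial:
  fixes Y :: "'a::field_char_0 mat" and T' :: "'a tens"
  assumes Y: "GL_over n UNIV Y" and ad: "Ad_tens n Y (r_DJ n) = T'"
   and contract: "\<And>a c W. a < n \<Longrightarrow> c < n \<Longrightarrow> (\<Sum>b<n. \<Sum>d<n. T' a b c d * W b d) =
      (if lt a c then W c a else 0) + (if a = c then W a a / 2 else 0) - W a c / (2 * of_nat n)"
   and irrefl: "\<And>a. \<not> lt a a"
  obtains \<rho> where "\<forall>m<n. \<rho> m < n" "\<forall>m<n. \<forall>a<n. a \<noteq> \<rho> m \<longrightarrow> Y $$ (a, m) = 0"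
    "\<forall>m1 m2. m1 < m2 \<longrightarrow> m2 < n \<longrightarrow> lt (\<rho> m1) (\<rho> m2)"
proof -
  have E: "(if d' < b' then Y $$ (a, d') * Y $$ (c, b') else 0) + (if b' = d' then Y $$ (a, b') * Y $$ (c, b') / 2 else 0)
       - Y $$ (a, b') * Y $$ (c, d') / (2 * of_nat n) =
     (if lt a c then Y $$ (c, b') * Y $$ (a, d') else 0) + (if a = c then Y $$ (a, b') * Y $$ (a, d') / 2 else 0)
       - Y $$ (a, b') * Y $$ (c, d') / (2 * of_nat n)"
    if idx: "a < n" "c < n" "b' < n" "d' < n" for a c b' d'
    using Ad_tens_eq_contract[OF Y ad idx] r_DJ_contract_left[OF idx(3,4), of "\<lambda>i p. Y $$ (a, i) * Y $$ (c, p)"]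
      contract[OF idx(1,2), of "\<lambda>b d. Y $$ (b, b') * Y $$ (d, d')"] by simp
  have column: "Y $$ (a, m) * Y $$ (c, m) = 0" if "a < n" "c < n" "m < n" "a \<noteq> c" for a c m
  proof -
    have "Y $$ (a, m) * Y $$ (c, m) / 2 = (if lt a c then Y $$ (c, m) * Y $$ (a, m) else 0)"
      using E[OF that(1,2,3,3)] that(4) by simp
    then show ?thesis by (cases "lt a c") (auto simp: mult.commute)
  qed
  define \<rho> where "\<rho> m = (SOME l. l < n \<and> Y $$ (l, m) \<noteq> 0)" for m
  have \<rho>: "\<rho> m < n \<and> Y $$ (\<rho> m, m) \<noteq> 0" if "m < n" for m
    using GL_over_column_nonzero[OF Y that] unfolding \<rho>_def by (metis (mono_tags, lifting) someI)
  have zero: "Y $$ (a, m) = 0" if "m < n" "a < n" "a \<noteq> \<rho> m" for m a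
    using column[OF that(2) _ that(1) that(3)] \<rho>[OF that(1)] by simp
  have order: "lt (\<rho> m1) (\<rho> m2)" if "m1 < m2" "m2 < n" for m1 m2
  proof -
    have m1: "m1 < n" using that by simp
    define a where "a = \<rho> m1"
    define c where "c = \<rho> m2"
    have ac: "a < n" "c < n" "Y $$ (a, m1) \<noteq> 0" "Y $$ (c, m2) \<noteq> 0"
      using \<rho>[OF m1] \<rho>[OF that(2)] unfolding a_def c_def by auto
    have e: "Y $$ (a, m1) * Y $$ (c, m2) = (if lt a c then Y $$ (c, m2) * Y $$ (a, m1) else 0)
        + (if a = c then Y $$ (a, m2) * Y $$ (a, m1) / 2 else 0)"
      using E[OF ac(1,2) that(2) m1] that(1) by simp
    show ?thesis
    proof (cases "a = c")
      case True
      then have "Y $$ (a, m1) * Y $$ (a, m2) = Y $$ (a, m2) * Y $$ (a, m1) / 2" using e irrefl by simp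
      then have "Y $$ (a, m1) * Y $$ (a, m2) = 0" by (simp add: mult.commute)
      then show ?thesis using ac True by simp
    next
      case False
      then show ?thesis using e ac unfolding a_def c_def by (cases "lt (\<rho> m1) (\<rho> m2)") auto
    qed
  qed
  show ?thesis using that \<rho> zero order by blast
qed

lemma diagonal_if_Ad_fixes_r_DJ:
  fixes Y :: "'a::field_char_0 mat"
  assumes Y: "GL_over n UNIV Y" and ad: "Ad_tens n Y (r_DJ n) = r_DJ n"
  shows "diagonal_mat Y"
proof -
  obtain \<rho> where \<rho>: "\<forall>m<n. \<rho> m < n" "\<forall>m<n. \<forall>a<n. a \<noteq> \<rho> m \<longrightarrow> Y $$ (a, m) = 0"
     "\<forall>m1 m2. m1 < m2 \<longrightarrow> m2 < n \<longrightarrow> \<rho> m1 < \<rho> m2"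
    using Ad_r_DJ_monomial[where lt = "(<)", OF Y ad r_DJ_contract_right] by auto
  have "\<rho> m = m" if "m < n" for m
    using strict_mono_self_map_eq_id[of n \<rho>] \<rho>(1,3) that by blast
  then show ?thesis using \<rho>(2) GL_overD(1)[OF Y] unfolding diagonal_mat_def by auto
qed

lemma antidiagonal_if_Ad_flips_r_DJ:
  fixes Y :: "'a::field_char_0 mat"
  assumes Y: "GL_over n UNIV Y" and ad: "Ad_tens n Y (r_DJ n) = flip_tens (r_DJ n)"
  shows "antidiagonal_mat n Y"
proof -
  obtain \<rho> where \<rho>: "\<forall>m<n. \<rho> m < n" "\<forall>m<n. \<forall>a<n. a \<noteq> \<rho> m \<longrightarrow> Y $$ (a, m) = 0"
     "\<forall>m1 m2. m1 < m2 \<longrightarrow> m2 < n \<longrightarrow> \<rho> m2 < \<rho> m1"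
    using Ad_r_DJ_monomial[where lt = "\<lambda>a c. c < a", OF Y ad flip_r_DJ_contract_right] by auto
  define \<tau> where "\<tau> m = n - 1 - \<rho> m" for m
  have \<tau>_range: "\<tau> m < n" if "m < n" for m unfolding \<tau>_def using that by arith
  have \<tau>_mono: "\<tau> m1 < \<tau> m2" if "m1 < m2" "m2 < n" for m1 m2
  proof -
    have "\<rho> m2 < \<rho> m1" "\<rho> m1 < n" using \<rho>(1,3) that by auto
    then show ?thesis unfolding \<tau>_def by arith
  qed
  have "\<rho> m = n - 1 - m" if "m < n" for m
  proof -
    have "\<tau> m = m" using strict_mono_self_map_eq_id[of n \<tau>, OF \<tau>_range \<tau>_mono that] .
    moreover have "\<rho> m < n" using \<rho>(1) that by blast
    ultimately show ?thesis unfolding \<tau>_def by arith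
  qed
  then show ?thesis using \<rho>(2) unfolding antidiagonal_mat_def by auto
qed

section \<open>The factorization of a twisted cocycle\<close>

context
  fixes j :: L
  assumes j_sq: "j ^ 2 = hbar"
begin

lemma GL_over_Kj_if_Gal_fixed:
  assumes P: "GL_over n UNIV P" and fixed: "\<forall>g\<in>Gal_Kj j. map_mat g P = P"
  shows "GL_over n (Kj j) P"
proof -
  note minv = GL_over_minv[OF P] and P_car = GL_overD(1)[OF P]
  have entries_Kj: "\<forall>i<n. \<forall>k<n. A $$ (i, k) \<in> Kj j"
    if A: "A \<in> carrier_mat n n" and A_fixed: "\<forall>g\<in>Gal_Kj j. map_mat g A = A" for A
  proof (intro allI impI)
    fix i k assume ik: "i < n" "k < n"
    have "g (A $$ (i, k)) = A $$ (i, k)" if "g \<in> Gal_Kj j" for g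
      using A_fixed that A ik by (metis carrier_matD index_map_mat(1))
    then show "A $$ (i, k) \<in> Kj j" using mem_Kj_if_Gal_fixed[OF j_sq] by blast
  qed
  have "map_mat g (minv n P) = minv n P" if "g \<in> Gal_Kj j" for g
    using map_mat_minv[of g n P] P fixed that unfolding Gal_Kj_def by auto
  then show ?thesis
    using GL_overI[OF P_car entries_Kj[OF P_car fixed] minv(1) entries_Kj[OF minv(1)] minv(2,3)]
    by blast
qed

lemma conj_factor_antidiag:
  assumes P: "GL_over n (Kj j) P" and \<sigma>: "\<sigma> \<in> Gal_K_conj j"
    and W: "W \<in> carrier_mat n n" "antidiagonal_mat n W" and twist: "map_mat \<sigma> P = P * W"
  shows "GL_over n (Kj j) (antidiag n * W)" "diagonal_mat (antidiag n * W)"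
    and "map_mat (conjKj j) P = P * antidiag n * (antidiag n * W)"
proof -
  have aut: "field_aut \<sigma>" and conj: "\<forall>x\<in>Kj j. \<sigma> x = conjKj j x"
    using \<sigma> unfolding Gal_K_conj_def by auto
  note P_car = GL_overD(1)[OF P] and P_Kj = GL_overD(2)[OF P] and S = antidiag_carrier[of n]
  have conjP: "map_mat (conjKj j) P = map_mat \<sigma> P"
    using P_car P_Kj conj by (intro eq_matI) auto
  have "minv n P * map_mat \<sigma> P = minv n P * P * W"
    unfolding twist by (rule assoc_mult_mat[OF GL_over_minv(1)[OF P] P_car W(1), symmetric])
  then have W_eq: "W = minv n P * map_mat \<sigma> P" using GL_over_minv(3)[OF P] W(1) by simp
  have "GL_over n (Kj j) (map_mat \<sigma> P)"
    by (rule GL_over_map_mat[OF aut _ P]) (use conj conjKj_in_Kj[OF j_sq] in simp)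
  then show "GL_over n (Kj j) (antidiag n * W)" unfolding W_eq
    using is_subfield_Kj[OF j_sq] GL_over_antidiag[OF subfield_0 subfield_1] GL_over_minv(4)[OF P]
    by (intro GL_over_mult) auto
  show "diagonal_mat (antidiag n * W)" by (rule diagonal_mat_antidiag_mult[OF W])
  have "P * antidiag n * (antidiag n * W) = P * (antidiag n * (antidiag n * W))"
    by (rule assoc_mult_mat[OF P_car S mult_carrier_mat[OF S W(1)]])
  also have "antidiag n * (antidiag n * W) = W"
    using assoc_mult_mat[OF S S W(1), symmetric] W(1) by (simp add: antidiag_mult_antidiag)
  finally show "map_mat (conjKj j) P = P * antidiag n * (antidiag n * W)"
    using conjP twist by simp
qed

end

theorem mainTheorem17:
  fixes j :: L and n :: nat and M :: "L mat"
  assumes "j ^ 2 = hbar"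
    and "BD_twisted_cocycle j n M"
  shows "\<exists>P D D1. GL_over n (Kj j) P \<and> GL_over n UNIV D \<and> diagonal_mat D \<and> M = P * D \<and>
           GL_over n (Kj j) D1 \<and> diagonal_mat D1 \<and>
           map_mat (conjKj j) P = P * antidiag n * D1"
proof -
  have M: "GL_over n UNIV M"
    and Gal_Kj: "\<And>g. g \<in> Gal_Kj j \<Longrightarrow> Ad_tens n (minv n M * map_mat g M) (r_DJ n) = r_DJ n"
    and Gal_conj: "\<And>g. g \<in> Gal_K_conj j \<Longrightarrow>
      Ad_tens n (minv n M * map_mat g M) (r_DJ n) = flip_tens (r_DJ n)"
    using assms(2) GL_over_UNIV_if_invertible_mat unfolding BD_twisted_cocycle_def by auto
  obtain P d piv where norm: "M = P * diag_matrix n d" "P = M * diag_matrix n (\<lambda>k. inverse (d k))"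
    "\<forall>k<n. d k \<noteq> 0" "\<forall>k<n. piv k < n \<and> P $$ (piv k, k) = 1"
    using column_normalization[OF M] .
  have "GL_over n UNIV P"
    unfolding norm(2) by (rule GL_over_mult[OF is_subfield_UNIV M GL_over_diag_matrix]) (use norm(3) in simp)
  moreover have "map_mat g P = P" if g: "g \<in> Gal_Kj j" for g
  proof -
    have aut: "field_aut g" using g unfolding Gal_Kj_def by blast
    obtain W where W: "W \<in> carrier_mat n n" "map_mat g P = P * W"
      "diagonal_mat (minv n M * map_mat g M) \<Longrightarrow> diagonal_mat W"
      using normalized_factor_twist[OF aut M norm(1,2)] by blast
    have "diagonal_mat (minv n M * map_mat g M)"
      by (rule diagonal_if_Ad_fixes_r_DJ[OF cocycle_twist(1)[OF aut M] Gal_Kj[OF g]])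
    then show ?thesis
      using map_mat_eq_if_twist_diagonal[OF aut GL_overD(1)[OF \<open>GL_over n UNIV P\<close>] norm(4)] W by blast
  qed
  ultimately have P: "GL_over n (Kj j) P" using GL_over_Kj_if_Gal_fixed[OF assms(1)] by blast
  obtain \<sigma> where \<sigma>: "\<sigma> \<in> Gal_K_conj j" using Gal_K_conj_nonempty[OF assms(1)] .
  then have aut: "field_aut \<sigma>" unfolding Gal_K_conj_def by blast
  obtain W where W: "W \<in> carrier_mat n n" "map_mat \<sigma> P = P * W"
    "antidiagonal_mat n (minv n M * map_mat \<sigma> M) \<Longrightarrow> antidiagonal_mat n W"
    using normalized_factor_twist[OF aut M norm(1,2)] by blast
  have "antidiagonal_mat n W"
    using W(3) antidiagonal_if_Ad_flips_r_DJ[OF cocycle_twist(1)[OF aut M] Gal_conj[OF \<sigma>]] by blast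
  from conj_factor_antidiag[OF assms(1) P \<sigma> W(1) this W(2)]
  show ?thesis using P norm(1,3) GL_over_diag_matrix diagonal_mat_diag_matrix by blast
qed

end
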